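(* Let $M$ be a pseudofinite $\mathcal{L}$-structure (an infinite ultraproduct of finite $\mathcal{L}$-structures) and $X\subseteq M^n$ an internal set. Suppose there is $r\in\mathbb{N}$ such that for every $\mathcal{L}$-formula $\varphi(x,y)$ over $\emptyset$ with $|x|=1$ and every $b\in M^{|y|}$, $\pmb{\delta}_X(\varphi(x,b))\in\{0,1,\dots,r\}$, and for each $i\le r$ the set $\{b\in M^{|y|}:\pmb{\delta}_X(\varphi(x,b))=i\}$ is $\emptyset$-definable. Then for every formula $\psi(x,y)$ and every $c\in M^{|y|}$, $\pmb{\delta}_X(\psi(x,c))\in\{0,\dots,|x|\cdot r\}$. Moreover, $\pmb{\delta}_X$ is definable.
   Context: For internal $D=\prod D_i/\mathcal{U}$, $|D|=(|D_i|)/\mathcal{U}\in\mathbb{R}^*$; for definable $A$, $\pmb{\delta}_X(A)=\mathrm{st}(\log|A|/\log|X|)$. $\pmb{\delta}_X$ is continuous if for every parameter-free formula $\phi(x,y)$ and reals $r_1<r_2$ there is a $\emptyset$-definable $D$ with $\{a:\pmb{\delta}_X(\phi(x,a))\le r_1\}\subseteq D\subseteq\{a:\pmb{\delta}_X(\phi(x,a))<r_2\}$; it is definable if it is continuous and for every parameter-free $\phi(x,y)$ the set $\{\pmb{\delta}_X(\phi(x,a)):a\in M^{|y|}\}$ is finite. *)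

theory Defs
  imports Complex_Main "HOL-Library.Extended_Real"
begin

text \<open>A language is given by the arities of its function symbols ('f) and relation
  symbols ('r). Variables are natural numbers.\<close>

datatype 'f trm = Var nat | Fn 'f "'f trm list"

datatype ('f, 'r) form =
    FF
  | Eq "'f trm" "'f trm"
  | Rel 'r "'f trm list"
  | Neg "('f, 'r) form"
  | Conj "('f, 'r) form" "('f, 'r) form"
  | Ex nat "('f, 'r) form"

record ('f, 'r, 'a) struc =
  sdom :: "'a set"
  sfun :: "'f \<Rightarrow> 'a list \<Rightarrow> 'a"
  srel :: "'r \<Rightarrow> 'a list \<Rightarrow> bool"

fun wft :: "('f \<Rightarrow> nat) \<Rightarrow> 'f trm \<Rightarrow> bool" where
  "wft fa (Var v) = True"
| "wft fa (Fn f ts) = (length ts = fa f \<and> (\<forall>t\<in>set ts. wft fa t))"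

fun wff :: "('f \<Rightarrow> nat) \<Rightarrow> ('r \<Rightarrow> nat) \<Rightarrow> ('f, 'r) form \<Rightarrow> bool" where
  "wff fa ra FF = True"
| "wff fa ra (Eq s t) = (wft fa s \<and> wft fa t)"
| "wff fa ra (Rel r ts) = (length ts = ra r \<and> (\<forall>t\<in>set ts. wft fa t))"
| "wff fa ra (Neg p) = wff fa ra p"
| "wff fa ra (Conj p q) = (wff fa ra p \<and> wff fa ra q)"
| "wff fa ra (Ex v p) = wff fa ra p"

fun fvt :: "'f trm \<Rightarrow> nat set" where
  "fvt (Var v) = {v}"
| "fvt (Fn f ts) = (\<Union>t\<in>set ts. fvt t)"

fun fvf :: "('f, 'r) form \<Rightarrow> nat set" where
  "fvf FF = {}"
| "fvf (Eq s t) = fvt s \<union> fvt t"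
| "fvf (Rel r ts) = (\<Union>t\<in>set ts. fvt t)"
| "fvf (Neg p) = fvf p"
| "fvf (Conj p q) = fvf p \<union> fvf q"
| "fvf (Ex v p) = fvf p - {v}"

fun evalt :: "('f, 'r, 'a) struc \<Rightarrow> (nat \<Rightarrow> 'a) \<Rightarrow> 'f trm \<Rightarrow> 'a" where
  "evalt S e (Var v) = e v"
| "evalt S e (Fn f ts) = sfun S f (map (evalt S e) ts)"

fun sat :: "('f, 'r, 'a) struc \<Rightarrow> (nat \<Rightarrow> 'a) \<Rightarrow> ('f, 'r) form \<Rightarrow> bool" where
  "sat S e FF = False"
| "sat S e (Eq s t) = (evalt S e s = evalt S e t)"
| "sat S e (Rel r ts) = srel S r (map (evalt S e) ts)"
| "sat S e (Neg p) = (\<not> sat S e p)"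
| "sat S e (Conj p q) = (sat S e p \<and> sat S e q)"
| "sat S e (Ex v p) = (\<exists>a\<in>sdom S. sat S (e(v := a)) p)"

definition is_struc :: "('f \<Rightarrow> nat) \<Rightarrow> ('f, 'r, 'a) struc \<Rightarrow> bool" where
  "is_struc fa S \<longleftrightarrow> sdom S \<noteq> {} \<and>
     (\<forall>f as. length as = fa f \<and> set as \<subseteq> sdom S \<longrightarrow> sfun S f as \<in> sdom S)"

definition tuples :: "'a set \<Rightarrow> nat \<Rightarrow> 'a list set" where
  "tuples D k = {xs. length xs = k \<and> set xs \<subseteq> D}"

definition lenv :: "'a list \<Rightarrow> nat \<Rightarrow> 'a" where
  "lenv xs v = (if v < length xs then xs ! v else undefined)"

text \<open>phi(x,b) for |x| = k: x are the variables 0..k-1, y the variables k..k+|b|-1.\<close>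
definition inst :: "('f, 'r, 'a) struc \<Rightarrow> nat \<Rightarrow> ('f, 'r) form \<Rightarrow> 'a list \<Rightarrow> 'a list set" where
  "inst M k phi b = {a \<in> tuples (sdom M) k. sat M (lenv (a @ b)) phi}"

text \<open>Parameter-free formula phi(x,y) with |x| = k, |y| = m.\<close>
definition pformula :: "('f \<Rightarrow> nat) \<Rightarrow> ('r \<Rightarrow> nat) \<Rightarrow> nat \<Rightarrow> nat \<Rightarrow> ('f, 'r) form \<Rightarrow> bool" where
  "pformula fa ra k m phi \<longleftrightarrow> wff fa ra phi \<and> fvf phi \<subseteq> {..<k + m}"

definition definable0 :: "('f \<Rightarrow> nat) \<Rightarrow> ('r \<Rightarrow> nat) \<Rightarrow> ('f, 'r, 'a) struc \<Rightarrow> nat \<Rightarrow> 'a list set \<Rightarrow> bool" where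
  "definable0 fa ra M m D \<longleftrightarrow>
     (\<exists>theta. pformula fa ra m 0 theta \<and> D = {b \<in> tuples (sdom M) m. sat M (lenv b) theta})"

definition ultrafilter :: "'i set set \<Rightarrow> bool" where
  "ultrafilter U \<longleftrightarrow> UNIV \<in> U \<and> {} \<notin> U \<and>
     (\<forall>A B. A \<in> U \<and> A \<subseteq> B \<longrightarrow> B \<in> U) \<and>
     (\<forall>A B. A \<in> U \<and> B \<in> U \<longrightarrow> A \<inter> B \<in> U) \<and>
     (\<forall>A. A \<in> U \<or> - A \<in> U)"

definition seqs :: "('i \<Rightarrow> ('f, 'r, 'a) struc) \<Rightarrow> ('i \<Rightarrow> 'a) set" where
  "seqs S = {a. \<forall>i. a i \<in> sdom (S i)}"

definition ucls :: "('i \<Rightarrow> ('f, 'r, 'a) struc) \<Rightarrow> 'i set set \<Rightarrow> ('i \<Rightarrow> 'a) \<Rightarrow> ('i \<Rightarrow> 'a) set" where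
  "ucls S U a = {b \<in> seqs S. {i. a i = b i} \<in> U}"

definition urep :: "('i \<Rightarrow> 'a) set \<Rightarrow> 'i \<Rightarrow> 'a" where
  "urep c = (SOME a. a \<in> c)"

definition uprod :: "('i \<Rightarrow> ('f, 'r, 'a) struc) \<Rightarrow> 'i set set \<Rightarrow> ('f, 'r, ('i \<Rightarrow> 'a) set) struc" where
  "uprod S U = \<lparr> sdom = ucls S U ` seqs S,
                 sfun = (\<lambda>f cs. ucls S U (\<lambda>i. sfun (S i) f (map (\<lambda>c. urep c i) cs))),
                 srel = (\<lambda>r cs. {i. srel (S i) r (map (\<lambda>c. urep c i) cs)} \<in> U) \<rparr>"

text \<open>The internal subset \<Pi> A_i / U of M^k determined by a family A_i of subsets of S_i^k.\<close>
definition uset :: "('i \<Rightarrow> ('f, 'r, 'a) struc) \<Rightarrow> 'i set set \<Rightarrow> nat \<Rightarrow> ('i \<Rightarrow> 'a list set)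
    \<Rightarrow> ('i \<Rightarrow> 'a) set list set" where
  "uset S U k A = {cs \<in> tuples (sdom (uprod S U)) k. {i. map (\<lambda>c. urep c i) cs \<in> A i} \<in> U}"

definition internal :: "('i \<Rightarrow> ('f, 'r, 'a) struc) \<Rightarrow> 'i set set \<Rightarrow> nat \<Rightarrow> ('i \<Rightarrow> 'a) set list set \<Rightarrow> bool" where
  "internal S U k D \<longleftrightarrow> (\<exists>A. (\<forall>i. A i \<subseteq> tuples (sdom (S i)) k) \<and> D = uset S U k A)"

text \<open>A chosen family representing an internal set (well defined up to U).\<close>
definition urepr :: "('i \<Rightarrow> ('f, 'r, 'a) struc) \<Rightarrow> 'i set set \<Rightarrow> nat \<Rightarrow> ('i \<Rightarrow> 'a) set list set
    \<Rightarrow> 'i \<Rightarrow> 'a list set" where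
  "urepr S U k D = (SOME A. (\<forall>i. A i \<subseteq> tuples (sdom (S i)) k) \<and> D = uset S U k A)"

text \<open>Standard part of the class of a real sequence, i.e. its U-limit, taken in the
  extended reals (infinite classes get \<plusminus>\<infinity>).\<close>
definition ulim :: "'i set set \<Rightarrow> ('i \<Rightarrow> real) \<Rightarrow> ereal" where
  "ulim U f = (THE L. \<forall>T. open T \<and> L \<in> T \<longrightarrow> {i. ereal (f i) \<in> T} \<in> U)"

definition lg :: "nat \<Rightarrow> real" where
  "lg n = (if n = 0 then 0 else ln (real n))"

text \<open>delta_X(A) = st(log|A| / log|X|), for internal X \<subseteq> M^n and internal A \<subseteq> M^k.\<close>
definition udelta :: "('i \<Rightarrow> ('f, 'r, 'a) struc) \<Rightarrow> 'i set set \<Rightarrow> nat \<Rightarrow> ('i \<Rightarrow> 'a) set list set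
    \<Rightarrow> nat \<Rightarrow> ('i \<Rightarrow> 'a) set list set \<Rightarrow> ereal" where
  "udelta S U n X k A =
     ulim U (\<lambda>i. lg (card (urepr S U k A i)) / lg (card (urepr S U n X i)))"

definition delta_continuous :: "('f \<Rightarrow> nat) \<Rightarrow> ('r \<Rightarrow> nat) \<Rightarrow> ('i \<Rightarrow> ('f, 'r, 'a) struc)
    \<Rightarrow> 'i set set \<Rightarrow> nat \<Rightarrow> ('i \<Rightarrow> 'a) set list set \<Rightarrow> bool" where
  "delta_continuous fa ra S U n X \<longleftrightarrow>
     (\<forall>phi k m. pformula fa ra k m phi \<longrightarrow>
       (\<forall>r1 r2 :: real. r1 < r2 \<longrightarrow>
         (\<exists>D. definable0 fa ra (uprod S U) m D \<and>
              {a \<in> tuples (sdom (uprod S U)) m.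
                  udelta S U n X k (inst (uprod S U) k phi a) \<le> ereal r1} \<subseteq> D \<and>
              D \<subseteq> {a \<in> tuples (sdom (uprod S U)) m.
                  udelta S U n X k (inst (uprod S U) k phi a) < ereal r2})))"

definition delta_definable :: "('f \<Rightarrow> nat) \<Rightarrow> ('r \<Rightarrow> nat) \<Rightarrow> ('i \<Rightarrow> ('f, 'r, 'a) struc)
    \<Rightarrow> 'i set set \<Rightarrow> nat \<Rightarrow> ('i \<Rightarrow> 'a) set list set \<Rightarrow> bool" where
  "delta_definable fa ra S U n X \<longleftrightarrow> delta_continuous fa ra S U n X \<and>
     (\<forall>phi k m. pformula fa ra k m phi \<longrightarrow>
        finite ((\<lambda>a. udelta S U n X k (inst (uprod S U) k phi a)) ` tuples (sdom (uprod S U)) m))"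

end

theory Submission
  imports Defs
begin

text \<open>
  Induct on the number \<open>k\<close> of object variables, splitting those of \<open>\<psi>(x\<^sub>0, x', c)\<close>
  as \<open>x\<^sub>0\<close> and \<open>x'\<close> with \<open>|x'| = k\<close>. By hypothesis the fibre \<open>\<psi>(M, a, c)\<close> over
  \<open>a \<in> M\<^sup>k\<close> has dimension \<open>j \<le> r\<close> exactly when \<open>a\<close> satisfies a \<open>\<emptyset>\<close>-definable condition
  \<open>\<theta>\<^sub>j(x', c)\<close>; put \<open>\<chi>\<^sub>j(x', c) = \<exists>x\<^sub>0. \<psi> \<and> \<theta>\<^sub>j\<close>. By Los's theorem the \<open>\<theta>\<^sub>j\<close> cover
  \<open>S\<^sub>i\<^sup>k\<close> and control the fibre sizes for almost all \<open>i\<close>, so \<open>|\<psi>(S\<^sub>i, c\<^sub>i)|\<close>, the sum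
  of the fibre sizes, grows like \<open>|X\<^sub>i|\<close> to the power \<open>max (\<delta>(\<chi>\<^sub>j(M, c)) + j)\<close> over
  the nonempty \<open>\<chi>\<^sub>j(M, c)\<close>: there are only \<open>r + 1\<close> pieces, which costs nothing on the
  logarithmic scale once \<open>log |X\<^sub>i| \<rightarrow> \<infinity>\<close>. By induction each \<open>\<delta>(\<chi>\<^sub>j(M, c))\<close> is a
  function of \<open>c\<close> into \<open>{0..kr}\<close> with \<open>\<emptyset>\<close>-definable level sets, hence so is their
  maximum \<open>\<delta>(\<psi>(M, c))\<close>, with values in \<open>{0..(k+1)r}\<close>. Finally, \<open>log |X\<^sub>i| \<rightarrow> \<infinity>\<close>
  unless \<open>|X\<^sub>i| \<le> 1\<close> almost always, because \<open>\<delta>\<^sub>X(M)\<close> is finite while \<open>|S\<^sub>i| \<rightarrow> \<infinity>\<close>;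
  in the degenerate case every \<open>\<delta>\<^sub>X\<close> is \<open>0\<close>.
\<close>

section \<open>Ultrafilters and ultralimits\<close>

definition set_filter :: "'i set set \<Rightarrow> 'i filter" where
  "set_filter U = Abs_filter (\<lambda>P. {i. P i} \<in> U)"

locale index_ultrafilter =
  fixes U :: "'i set set"
  assumes ultrafilter: "ultrafilter U"
begin

abbreviation \<U> :: "'i filter" where "\<U> \<equiv> set_filter U"

lemma eventually_U: "eventually P \<U> \<longleftrightarrow> {i. P i} \<in> U"
proof -
  have "is_filter (\<lambda>P. {i. P i} \<in> U)"
  proof
    show "{i. True} \<in> U"
      using ultrafilter by (simp add: ultrafilter_def)
    show "{i. P i \<and> Q i} \<in> U" if "{i. P i} \<in> U" "{i. Q i} \<in> U" for P Q
      using ultrafilter that unfolding ultrafilter_def Collect_conj_eq by blast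
    show "{i. Q i} \<in> U" if "\<forall>i. P i \<longrightarrow> Q i" "{i. P i} \<in> U" for P Q
      using ultrafilter that unfolding ultrafilter_def by (metis mem_Collect_eq subsetI)
  qed
  then show ?thesis
    unfolding set_filter_def by (rule eventually_Abs_filter)
qed

lemma U_neq_bot: "\<U> \<noteq> bot"
  using ultrafilter by (simp add: trivial_limit_def eventually_U ultrafilter_def)

lemma not_eventually_U: "\<not> eventually P \<U> \<longleftrightarrow> eventually (\<lambda>i. \<not> P i) \<U>"
proof
  assume "\<not> eventually P \<U>"
  then show "eventually (\<lambda>i. \<not> P i) \<U>"
    using ultrafilter by (auto simp: eventually_U ultrafilter_def Collect_neg_eq)
next
  assume "eventually (\<lambda>i. \<not> P i) \<U>"
  show "\<not> eventually P \<U>"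
  proof
    assume "eventually P \<U>"
    with \<open>eventually (\<lambda>i. \<not> P i) \<U>\<close> have "eventually (\<lambda>i. False) \<U>"
      by (auto elim: eventually_elim2)
    with U_neq_bot show False by simp
  qed
qed

lemma eventually_iff_U:
  assumes "eventually P \<U> \<longleftrightarrow> eventually Q \<U>"
  shows "eventually (\<lambda>i. P i \<longleftrightarrow> Q i) \<U>"
proof (cases "eventually P \<U>")
  case True
  then show ?thesis
    using assms by (auto elim: eventually_elim2)
next
  case False
  then have "eventually (\<lambda>i. \<not> P i) \<U>" "eventually (\<lambda>i. \<not> Q i) \<U>"
    using assms not_eventually_U by blast+
  then show ?thesis by (auto elim: eventually_elim2)
qed

lemma ultralimit_exists:
  fixes g :: "'i \<Rightarrow> 'b::{complete_linorder, linorder_topology}"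
  shows "\<exists>L. (g \<longlongrightarrow> L) \<U>"
proof -
  define L where "L = Sup {x. eventually (\<lambda>i. x \<le> g i) \<U>}"
  have "(g \<longlongrightarrow> L) \<U>"
  proof (rule order_tendstoI)
    fix a assume "a < L"
    then obtain x where "eventually (\<lambda>i. x \<le> g i) \<U>" "a < x"
      unfolding L_def less_Sup_iff by blast
    then show "eventually (\<lambda>i. a < g i) \<U>"
      by (auto elim: eventually_mono)
  next
    fix a assume "L < a"
    show "eventually (\<lambda>i. g i < a) \<U>"
    proof (rule ccontr)
      assume "\<not> eventually (\<lambda>i. g i < a) \<U>"
      then have "eventually (\<lambda>i. a \<le> g i) \<U>"
        unfolding not_eventually_U by (simp add: not_less)
      then have "a \<le> L"
        unfolding L_def by (auto intro: Sup_upper)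
      with \<open>L < a\<close> show False by simp
    qed
  qed
  then show ?thesis ..
qed

lemma ulim_eq_iff: "ulim U f = L \<longleftrightarrow> ((\<lambda>i. ereal (f i)) \<longlongrightarrow> L) \<U>"
proof -
  have ulim: "ulim U f = (THE L. ((\<lambda>i. ereal (f i)) \<longlongrightarrow> L) \<U>)"
    unfolding ulim_def tendsto_def eventually_U by (simp add: imp_conjL)
  obtain L' where L': "((\<lambda>i. ereal (f i)) \<longlongrightarrow> L') \<U>"
    using ultralimit_exists by blast
  then have "ulim U f = L'"
    unfolding ulim using tendsto_unique[OF U_neq_bot] by blast
  then show ?thesis
    using L' tendsto_unique[OF U_neq_bot] by blast
qed

lemma ulim_eq_ereal_iff: "ulim U f = ereal L \<longleftrightarrow> (f \<longlongrightarrow> L) \<U>"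
  by (simp add: ulim_eq_iff lim_ereal)

lemma ulim_cong: "eventually (\<lambda>i. f i = g i) \<U> \<Longrightarrow> ulim U f = ulim U g"
  using ulim_eq_iff[of f] ulim_eq_iff[of g] tendsto_cong[of "\<lambda>i. ereal (f i)" "\<lambda>i. ereal (g i)"]
  by (metis (mono_tags, lifting) eventually_mono)

end

lemma eventually_choice:
  assumes "eventually (\<lambda>i. \<exists>x\<in>A i. P i x) F" and "\<And>i. A i \<noteq> {}"
  shows "\<exists>b. (\<forall>i. b i \<in> A i) \<and> eventually (\<lambda>i. P i (b i)) F"
proof -
  have "\<forall>i. \<exists>x\<in>A i. (\<exists>y\<in>A i. P i y) \<longrightarrow> P i x"
    using assms(2) by blast
  then obtain b where b: "\<forall>i. b i \<in> A i \<and> ((\<exists>y\<in>A i. P i y) \<longrightarrow> P i (b i))"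
    by metis
  have "eventually (\<lambda>i. P i (b i)) F"
    using assms(1) by (rule eventually_mono) (use b in blast)
  then show ?thesis
    using b by blast
qed

section \<open>Renaming and quantifying out variables\<close>

lemma evalt_cong: "(\<forall>v\<in>fvt t. e v = e' v) \<Longrightarrow> evalt T e t = evalt T e' t"
  by (induction t) (auto cong: map_cong)

lemma sat_cong: "(\<forall>v\<in>fvf p. e v = e' v) \<Longrightarrow> sat T e p = sat T e' p"
proof (induction p arbitrary: e e')
  case (Eq s t)
  then show ?case
    using evalt_cong[of s e e' T] evalt_cong[of t e e' T] by simp
next
  case (Rel r ts)
  have "map (evalt T e) ts = map (evalt T e') ts"
    using Rel.prems by (auto intro!: evalt_cong)
  then show ?case by (simp only: sat.simps)
next
  case (Ex x p)
  then have "sat T (e(x := a)) p = sat T (e'(x := a)) p" for a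
    by (intro Ex.IH) auto
  then show ?case by simp
next
  case (Conj p q)
  then have "sat T e p = sat T e' p" "sat T e q = sat T e' q"
    by auto
  then show ?case by simp
qed auto

fun rename_trm :: "(nat \<Rightarrow> nat) \<Rightarrow> 'f trm \<Rightarrow> 'f trm" where
  "rename_trm s (Var v) = Var (s v)"
| "rename_trm s (Fn f ts) = Fn f (map (rename_trm s) ts)"

fun rename :: "(nat \<Rightarrow> nat) \<Rightarrow> ('f, 'r) form \<Rightarrow> ('f, 'r) form" where
  "rename s FF = FF"
| "rename s (Eq a b) = Eq (rename_trm s a) (rename_trm s b)"
| "rename s (Rel r ts) = Rel r (map (rename_trm s) ts)"
| "rename s (Neg p) = Neg (rename s p)"
| "rename s (Conj p q) = Conj (rename s p) (rename s q)"
| "rename s (Ex v p) = Ex (s v) (rename s p)"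

lemma evalt_rename: "evalt T e (rename_trm s t) = evalt T (e \<circ> s) t"
  by (induction t) (auto cong: map_cong)

lemma sat_rename: "inj s \<Longrightarrow> sat T e (rename s p) = sat T (e \<circ> s) p"
proof (induction p arbitrary: e)
  case (Ex x p)
  have "(e(s x := a)) \<circ> s = (e \<circ> s)(x := a)" for a
    using Ex.prems by (auto simp: fun_eq_iff inj_eq)
  then show ?case
    by (simp only: rename.simps sat.simps Ex.IH[OF Ex.prems])
qed (simp_all add: evalt_rename comp_def cong: map_cong)

lemma wff_rename: "wff fa ra (rename s p) = wff fa ra p"
proof -
  have "wft fa (rename_trm s t) = wft fa t" for t
    by (induction t) auto
  then show ?thesis
    by (induction p) auto
qed

lemma fvf_rename: "inj s \<Longrightarrow> fvf (rename s p) = s ` fvf p"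
proof -
  have "fvt (rename_trm s t) = s ` fvt t" for t :: "'a trm"
    by (induction t) auto
  then show "inj s \<Longrightarrow> ?thesis"
    by (induction p) (auto simp: inj_eq image_UN)
qed

lemma lenv_Cons: "lenv (x # l) v = (if v = 0 then x else lenv l (v - 1))"
  by (cases v) (auto simp: lenv_def)

lemma lenv_Cons_comp_Suc: "lenv (x # l) \<circ> Suc = lenv l"
  by (auto simp: fun_eq_iff lenv_Cons)

text \<open>Quantifying out the variable \<open>0\<close> of a formula in the variables \<open>0..n\<close>: the bound
  variable is renamed to \<open>n\<close> and the variables \<open>1..n\<close> are shifted down, so that the
  result is a formula in the variables \<open>0..n-1\<close>.\<close>

definition rot :: "nat \<Rightarrow> nat \<Rightarrow> nat" where
  "rot n v = (if v = 0 then n else if v \<le> n then v - 1 else v)"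

definition ex_first :: "nat \<Rightarrow> ('f, 'r) form \<Rightarrow> ('f, 'r) form" where
  "ex_first n p = rename (rot n) (Ex 0 p)"

lemma inj_rot: "inj (rot n)"
  unfolding inj_def rot_def by auto

lemma sat_ex_first:
  assumes "fvf p \<subseteq> {..n}"
  shows "sat T (lenv l) (ex_first n p) \<longleftrightarrow> (\<exists>x\<in>sdom T. sat T (lenv (x # l)) p)"
proof -
  have "sat T ((lenv l \<circ> rot n)(0 := x)) p = sat T (lenv (x # l)) p" for x
    by (rule sat_cong) (use assms in \<open>auto simp: rot_def lenv_Cons\<close>)
  then show ?thesis
    unfolding ex_first_def sat_rename[OF inj_rot] by simp
qed

lemma wff_ex_first: "wff fa ra (ex_first n p) = wff fa ra p"
  by (simp add: ex_first_def wff_rename)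

lemma fvf_ex_first: "fvf p \<subseteq> {..n} \<Longrightarrow> fvf (ex_first n p) \<subseteq> {..<n}"
  unfolding ex_first_def fvf_rename[OF inj_rot] by (auto simp: rot_def)

definition ex_first_and :: "nat \<Rightarrow> ('f, 'r) form \<Rightarrow> ('f, 'r) form \<Rightarrow> ('f, 'r) form" where
  "ex_first_and n p q = ex_first n (Conj p (rename Suc q))"

lemma fvf_Conj_rename_Suc:
  assumes "fvf p \<subseteq> {..n}" "fvf q \<subseteq> {..<n}"
  shows "fvf (Conj p (rename Suc q)) \<subseteq> {..n}"
  using assms by (auto simp: fvf_rename)

lemma sat_ex_first_and:
  assumes "fvf p \<subseteq> {..n}" "fvf q \<subseteq> {..<n}"
  shows "sat T (lenv l) (ex_first_and n p q) \<longleftrightarrow>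
    (\<exists>x\<in>sdom T. sat T (lenv (x # l)) p) \<and> sat T (lenv l) q"
  unfolding ex_first_and_def sat_ex_first[OF fvf_Conj_rename_Suc[OF assms]]
  by (simp add: sat_rename lenv_Cons_comp_Suc)

lemma pformula_ex_first_and:
  assumes "pformula fa ra (Suc k) m p" "pformula fa ra (k + m) 0 q"
  shows "pformula fa ra k m (ex_first_and (k + m) p q)"
  using assms fvf_ex_first[OF fvf_Conj_rename_Suc, of p "k + m" q]
  by (auto simp: pformula_def ex_first_and_def wff_ex_first wff_rename lessThan_Suc_atMost)

fun ex_prefix :: "nat \<Rightarrow> nat \<Rightarrow> ('f, 'r) form \<Rightarrow> ('f, 'r) form" where
  "ex_prefix 0 m p = p"
| "ex_prefix (Suc k) m p = ex_prefix k m (ex_first (k + m) p)"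

lemma wff_ex_prefix: "wff fa ra (ex_prefix k m p) = wff fa ra p"
  by (induction k arbitrary: p) (simp_all add: wff_ex_first)

lemma fvf_ex_prefix: "fvf p \<subseteq> {..<k + m} \<Longrightarrow> fvf (ex_prefix k m p) \<subseteq> {..<m}"
proof (induction k arbitrary: p)
  case (Suc k)
  have "fvf (ex_first (k + m) p) \<subseteq> {..<k + m}"
    using Suc.prems by (intro fvf_ex_first) (simp add: lessThan_Suc_atMost)
  then show ?case
    by (simp add: Suc.IH)
qed simp

section \<open>Tuples and instances of formulas\<close>

lemma tuples_0: "tuples D 0 = {[]}"
  by (auto simp: tuples_def)

lemma tuples_Suc: "tuples D (Suc k) = {x # a | x a. x \<in> D \<and> a \<in> tuples D k}"
  by (auto simp: tuples_def length_Suc_conv)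

lemma bex_tuples_Suc: "(\<exists>a\<in>tuples D (Suc k). P a) \<longleftrightarrow> (\<exists>x\<in>D. \<exists>a\<in>tuples D k. P (x # a))"
  unfolding tuples_Suc by blast

lemma tuples_1: "tuples D 1 = (\<lambda>x. [x]) ` D"
  by (auto simp: tuples_Suc tuples_0)

lemma card_tuples_1: "card (tuples D 1) = card D"
  unfolding tuples_1 by (rule card_image) (simp add: inj_on_def)

lemma finite_tuples: "finite D \<Longrightarrow> finite (tuples D k)"
  unfolding tuples_def using finite_lists_length_eq[of D k] by (simp add: conj_commute)

lemma tuples_nonempty:
  assumes "D \<noteq> {}"
  shows "tuples D k \<noteq> {}"
proof -
  obtain x where "x \<in> D"
    using assms by blast
  then have "replicate k x \<in> tuples D k"
    by (simp add: tuples_def set_replicate_conv_if)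
  then show ?thesis
    by blast
qed

lemma append_in_tuples: "a \<in> tuples D k \<Longrightarrow> b \<in> tuples D m \<Longrightarrow> a @ b \<in> tuples D (k + m)"
  unfolding tuples_def by auto

lemma sat_ex_prefix:
  "fvf p \<subseteq> {..<k + m} \<Longrightarrow>
    sat T (lenv cs) (ex_prefix k m p) \<longleftrightarrow> (\<exists>a\<in>tuples (sdom T) k. sat T (lenv (a @ cs)) p)"
proof (induction k arbitrary: p)
  case 0
  then show ?case by (simp add: tuples_0)
next
  case (Suc k)
  have fv: "fvf p \<subseteq> {..k + m}"
    using Suc.prems by (simp add: lessThan_Suc_atMost)
  have "sat T (lenv (a @ cs)) (ex_first (k + m) p) \<longleftrightarrow> (\<exists>x\<in>sdom T. sat T (lenv (x # a @ cs)) p)"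
    for a
    by (rule sat_ex_first[OF fv])
  then have "sat T (lenv cs) (ex_prefix (Suc k) m p) \<longleftrightarrow>
      (\<exists>a\<in>tuples (sdom T) k. \<exists>x\<in>sdom T. sat T (lenv (x # a @ cs)) p)"
    using Suc.IH[OF fvf_ex_first[OF fv]] by (simp only: ex_prefix.simps)
  also have "\<dots> \<longleftrightarrow> (\<exists>a\<in>tuples (sdom T) (Suc k). sat T (lenv (a @ cs)) p)"
    unfolding bex_tuples_Suc append_Cons by blast
  finally show ?case .
qed

lemma inst_subset: "inst T k p c \<subseteq> tuples (sdom T) k"
  by (auto simp: inst_def)

lemma inst_1_ne_iff: "inst T 1 p c \<noteq> {} \<longleftrightarrow> (\<exists>x\<in>sdom T. sat T (lenv (x # c)) p)"
  unfolding inst_def tuples_1 by auto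

lemma inst_Suc: "inst T (Suc k) p c = (\<Union>a\<in>tuples (sdom T) k. (\<lambda>y. y @ a) ` inst T 1 p (a @ c))"
proof (rule set_eqI)
  fix t
  show "t \<in> inst T (Suc k) p c \<longleftrightarrow> t \<in> (\<Union>a\<in>tuples (sdom T) k. (\<lambda>y. y @ a) ` inst T 1 p (a @ c))"
    unfolding inst_def tuples_Suc tuples_1
    by (cases t) (auto intro!: bexI[where x = "tl t"] image_eqI[where x = "[hd t]"])
qed

lemma card_inst_Suc:
  assumes "finite (sdom T)"
  shows "card (inst T (Suc k) p c) = (\<Sum>a\<in>tuples (sdom T) k. card (inst T 1 p (a @ c)))"
proof -
  have fin: "finite (inst T 1 p d)" for d
    using finite_subset[OF inst_subset finite_tuples[OF assms]] .
  have len: "length y = 1" if "y \<in> inst T 1 p d" for y d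
    using that inst_subset unfolding tuples_def by blast
  have "card (inst T (Suc k) p c) = (\<Sum>a\<in>tuples (sdom T) k. card ((\<lambda>y. y @ a) ` inst T 1 p (a @ c)))"
    unfolding inst_Suc
    by (rule card_UN_disjoint) (auto simp del: One_nat_def simp: fin finite_tuples[OF assms] dest!: len)
  also have "\<dots> = (\<Sum>a\<in>tuples (sdom T) k. card (inst T 1 p (a @ c)))"
    by (intro sum.cong refl card_image) (simp add: inj_on_def)
  finally show ?thesis .
qed

lemma inst_ex_first_and:
  assumes "pformula fa ra (Suc k) m p" "pformula fa ra (k + m) 0 q"
  shows "inst T k (ex_first_and (k + m) p q) c =
    {a \<in> tuples (sdom T) k. inst T 1 p (a @ c) \<noteq> {} \<and> sat T (lenv (a @ c)) q}"
proof -
  have "fvf p \<subseteq> {..k + m}" "fvf q \<subseteq> {..<k + m}"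
    using assms by (auto simp: pformula_def lessThan_Suc_atMost[symmetric])
  then show ?thesis
    unfolding inst_1_ne_iff by (auto simp: inst_def sat_ex_first_and)
qed

section \<open>Definable sets and functions\<close>

lemma definable0_formula:
  "pformula fa ra m 0 \<theta> \<Longrightarrow> definable0 fa ra T m {b \<in> tuples (sdom T) m. sat T (lenv b) \<theta>}"
  unfolding definable0_def by blast

lemma definable0_subset: "definable0 fa ra T m D \<Longrightarrow> D \<subseteq> tuples (sdom T) m"
  unfolding definable0_def by auto

lemma definable0_tuples: "definable0 fa ra T m (tuples (sdom T) m)"
  unfolding definable0_def pformula_def by (rule exI[of _ "Neg FF"]) auto

lemma definable0_empty: "definable0 fa ra T m {}"
  unfolding definable0_def pformula_def by (rule exI[of _ FF]) auto

lemma definable0_Int: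
  assumes "definable0 fa ra T m A" "definable0 fa ra T m B"
  shows "definable0 fa ra T m (A \<inter> B)"
proof -
  obtain \<alpha> \<beta> where "pformula fa ra m 0 \<alpha>" "A = {b \<in> tuples (sdom T) m. sat T (lenv b) \<alpha>}"
    "pformula fa ra m 0 \<beta>" "B = {b \<in> tuples (sdom T) m. sat T (lenv b) \<beta>}"
    using assms unfolding definable0_def by blast
  then show ?thesis
    unfolding definable0_def pformula_def by (intro exI[of _ "Conj \<alpha> \<beta>"]) auto
qed

lemma definable0_Diff:
  assumes "definable0 fa ra T m A"
  shows "definable0 fa ra T m (tuples (sdom T) m - A)"
proof -
  obtain \<alpha> where "pformula fa ra m 0 \<alpha>" "A = {b \<in> tuples (sdom T) m. sat T (lenv b) \<alpha>}"
    using assms unfolding definable0_def by blast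
  then show ?thesis
    unfolding definable0_def pformula_def by (intro exI[of _ "Neg \<alpha>"]) auto
qed

lemma definable0_Un:
  assumes "definable0 fa ra T m A" "definable0 fa ra T m B"
  shows "definable0 fa ra T m (A \<union> B)"
proof -
  have "A \<union> B = tuples (sdom T) m - ((tuples (sdom T) m - A) \<inter> (tuples (sdom T) m - B))"
    using assms by (auto dest: definable0_subset)
  then show ?thesis
    using assms by (simp add: definable0_Diff definable0_Int)
qed

lemma definable0_UN:
  "finite I \<Longrightarrow> (\<And>x. x \<in> I \<Longrightarrow> definable0 fa ra T m (D x)) \<Longrightarrow> definable0 fa ra T m (\<Union>x\<in>I. D x)"
  by (induction I rule: finite_induct) (auto intro: definable0_empty definable0_Un)

lemma definable0_inst_ne:
  assumes "pformula fa ra k m p"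
  shows "definable0 fa ra T m {cs \<in> tuples (sdom T) m. inst T k p cs \<noteq> {}}"
proof -
  have fv: "fvf p \<subseteq> {..<k + m}" and "wff fa ra p"
    using assms by (auto simp: pformula_def)
  then have "pformula fa ra m 0 (ex_prefix k m p)"
    by (simp add: pformula_def wff_ex_prefix fvf_ex_prefix)
  moreover have "sat T (lenv cs) (ex_prefix k m p) \<longleftrightarrow> inst T k p cs \<noteq> {}" for cs
    unfolding sat_ex_prefix[OF fv] inst_def by blast
  ultimately show ?thesis
    using definable0_formula[of fa ra m "ex_prefix k m p" T] by simp
qed

definition definable_fun :: "('f \<Rightarrow> nat) \<Rightarrow> ('r \<Rightarrow> nat) \<Rightarrow> ('f, 'r, 'a) struc \<Rightarrow> nat
    \<Rightarrow> ('a list \<Rightarrow> nat) \<Rightarrow> bool" where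
  "definable_fun fa ra T m g \<longleftrightarrow> (\<forall>l. definable0 fa ra T m {cs \<in> tuples (sdom T) m. g cs = l})"

lemma definable0_le:
  assumes "definable_fun fa ra T m g"
  shows "definable0 fa ra T m {cs \<in> tuples (sdom T) m. g cs \<le> l}"
proof -
  have "{cs \<in> tuples (sdom T) m. g cs \<le> l} = (\<Union>l'\<in>{..l}. {cs \<in> tuples (sdom T) m. g cs = l'})"
    by auto
  then show ?thesis
    using assms unfolding definable_fun_def by (simp add: definable0_UN)
qed

lemma definable_fun_const: "definable_fun fa ra T m (\<lambda>cs. c)"
  unfolding definable_fun_def
proof
  fix l
  show "definable0 fa ra T m {cs \<in> tuples (sdom T) m. c = l}"
    by (cases "c = l") (simp_all add: definable0_tuples definable0_empty)
qed

lemma definable_fun_add_const: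
  assumes "definable_fun fa ra T m g"
  shows "definable_fun fa ra T m (\<lambda>cs. g cs + j)"
  unfolding definable_fun_def
proof
  fix l
  show "definable0 fa ra T m {cs \<in> tuples (sdom T) m. g cs + j = l}"
  proof (cases "j \<le> l")
    case True
    then have "{cs \<in> tuples (sdom T) m. g cs + j = l} = {cs \<in> tuples (sdom T) m. g cs = l - j}"
      by auto
    then show ?thesis
      using assms unfolding definable_fun_def by simp
  next
    case False
    then show ?thesis
      using definable0_empty by (simp add: not_le)
  qed
qed

lemma definable_fun_if:
  assumes "definable0 fa ra T m D" "definable_fun fa ra T m g" "definable_fun fa ra T m h"
  shows "definable_fun fa ra T m (\<lambda>cs. if cs \<in> D then g cs else h cs)"
  unfolding definable_fun_def
proof
  fix l
  have "{cs \<in> tuples (sdom T) m. (if cs \<in> D then g cs else h cs) = l} =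
      D \<inter> {cs \<in> tuples (sdom T) m. g cs = l} \<union>
      (tuples (sdom T) m - D) \<inter> {cs \<in> tuples (sdom T) m. h cs = l}"
    by auto
  then show "definable0 fa ra T m {cs \<in> tuples (sdom T) m. (if cs \<in> D then g cs else h cs) = l}"
    using assms unfolding definable_fun_def
    by (simp add: definable0_Un definable0_Int definable0_Diff)
qed

lemma definable_fun_max:
  assumes "definable_fun fa ra T m g" "definable_fun fa ra T m h"
  shows "definable_fun fa ra T m (\<lambda>cs. max (g cs) (h cs))"
  unfolding definable_fun_def
proof
  fix l
  have "{cs \<in> tuples (sdom T) m. max (g cs) (h cs) = l} =
      {cs \<in> tuples (sdom T) m. g cs = l} \<inter> {cs \<in> tuples (sdom T) m. h cs \<le> l} \<union>
      {cs \<in> tuples (sdom T) m. h cs = l} \<inter> {cs \<in> tuples (sdom T) m. g cs \<le> l}"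
    by (auto simp: max_def)
  then show "definable0 fa ra T m {cs \<in> tuples (sdom T) m. max (g cs) (h cs) = l}"
    using assms unfolding definable_fun_def
    by (simp add: definable0_Un definable0_Int definable0_le assms)
qed

lemma definable_fun_Max:
  assumes "finite I" "I \<noteq> {}" "\<And>j. j \<in> I \<Longrightarrow> definable_fun fa ra T m (g j)"
  shows "definable_fun fa ra T m (\<lambda>cs. Max ((\<lambda>j. g j cs) ` I))"
  using assms
proof (induction I rule: finite_ne_induct)
  case (singleton j)
  then show ?case by simp
next
  case (insert j I)
  then show ?case
    using definable_fun_max[of fa ra T m "g j"] by simp
qed

section \<open>Ultraproducts and Los's theorem\<close>

definition urep_list :: "('i \<Rightarrow> 'a) set list \<Rightarrow> 'i \<Rightarrow> 'a list" where
  "urep_list cs i = map (\<lambda>c. urep c i) cs"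

lemma urep_list_append: "urep_list (a @ b) i = urep_list a i @ urep_list b i"
  by (simp add: urep_list_def)

locale ultraproduct = index_ultrafilter U for U :: "'i set set" +
  fixes fa :: "'f \<Rightarrow> nat" and ra :: "'r \<Rightarrow> nat" and S :: "'i \<Rightarrow> ('f, 'r, 'a) struc"
  assumes strucs: "\<And>i. is_struc fa (S i)"
begin

abbreviation M :: "('f, 'r, ('i \<Rightarrow> 'a) set) struc" where
  "M \<equiv> uprod S U"

lemma sdom_nonempty: "sdom (S i) \<noteq> {}"
  using strucs[of i] by (simp add: is_struc_def)

lemma sfun_closed: "length as = fa f \<Longrightarrow> set as \<subseteq> sdom (S i) \<Longrightarrow> sfun (S i) f as \<in> sdom (S i)"
  using strucs[of i] by (simp add: is_struc_def)

lemma seqs_choice: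
  assumes "eventually (\<lambda>i. \<exists>x\<in>sdom (S i). P i x) \<U>"
  shows "\<exists>b\<in>seqs S. eventually (\<lambda>i. P i (b i)) \<U>"
  using eventually_choice[OF assms sdom_nonempty] by (auto simp: seqs_def)

lemma seqs_nonempty: "seqs S \<noteq> {}"
proof -
  have "(\<lambda>i. SOME x. x \<in> sdom (S i)) \<in> seqs S"
    unfolding seqs_def using sdom_nonempty by (simp add: some_in_eq)
  then show ?thesis
    by blast
qed

lemma ucls_eq_iff:
  assumes "a \<in> seqs S" "b \<in> seqs S"
  shows "ucls S U a = ucls S U b \<longleftrightarrow> eventually (\<lambda>i. a i = b i) \<U>"
proof
  assume "ucls S U a = ucls S U b"
  moreover have "b \<in> ucls S U b"
    using assms(2) by (simp add: ucls_def eventually_U[symmetric])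
  ultimately have "b \<in> ucls S U a"
    by simp
  then show "eventually (\<lambda>i. a i = b i) \<U>"
    by (simp add: ucls_def eventually_U)
next
  assume ab: "eventually (\<lambda>i. a i = b i) \<U>"
  have "eventually (\<lambda>i. a i = c i) \<U> \<longleftrightarrow> eventually (\<lambda>i. b i = c i) \<U>" for c
    using ab by (auto elim: eventually_elim2)
  then show "ucls S U a = ucls S U b"
    by (simp add: ucls_def eventually_U[symmetric])
qed

lemma sdom_uprod: "sdom M = ucls S U ` seqs S"
  by (simp add: uprod_def)

lemma urep_in_sdom_uprod:
  assumes "c \<in> sdom M"
  shows urep_in_seqs: "urep c \<in> seqs S" and ucls_urep: "ucls S U (urep c) = c"
proof -
  obtain a where a: "a \<in> seqs S" "c = ucls S U a"
    using assms sdom_uprod by auto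
  then have "a \<in> c"
    by (simp add: ucls_def eventually_U[symmetric])
  then have "urep c \<in> c"
    unfolding urep_def by (rule someI[of "\<lambda>x. x \<in> c"])
  then have "urep c \<in> seqs S" "eventually (\<lambda>i. a i = urep c i) \<U>"
    using a by (simp_all add: ucls_def eventually_U)
  then show "urep c \<in> seqs S" "ucls S U (urep c) = c"
    using a ucls_eq_iff[of "urep c" a] by (simp_all add: eq_commute)
qed

lemma urep_in_sdom: "c \<in> sdom M \<Longrightarrow> urep c i \<in> sdom (S i)"
  using urep_in_seqs by (simp add: seqs_def)

lemma eventually_urep_ucls:
  assumes "a \<in> seqs S"
  shows "eventually (\<lambda>i. urep (ucls S U a) i = a i) \<U>"
proof -
  have "ucls S U a \<in> sdom M"
    using assms by (simp add: sdom_uprod)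
  then show ?thesis
    using assms ucls_eq_iff urep_in_seqs ucls_urep by metis
qed

lemma eventually_map_urep_ucls:
  assumes "set as \<subseteq> seqs S"
  shows "eventually (\<lambda>i. map (\<lambda>a. urep (ucls S U a) i) as = map (\<lambda>a. a i) as) \<U>"
proof -
  have "eventually (\<lambda>i. \<forall>a\<in>set as. urep (ucls S U a) i = a i) \<U>"
    using assms by (intro eventually_ball_finite) (auto intro: eventually_urep_ucls)
  then show ?thesis
    by (rule eventually_mono) simp
qed

lemma sfun_uprod:
  assumes "length as = fa f" "set as \<subseteq> seqs S"
  shows "(\<lambda>i. sfun (S i) f (map (\<lambda>a. a i) as)) \<in> seqs S"
    and "sfun M f (map (ucls S U) as) = ucls S U (\<lambda>i. sfun (S i) f (map (\<lambda>a. a i) as))"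
proof -
  have closed: "(\<lambda>i. sfun (S i) f (map (\<lambda>a. h a i) as)) \<in> seqs S"
    if "\<And>a. a \<in> set as \<Longrightarrow> h a \<in> seqs S" for h
    using that assms(1) by (auto simp: seqs_def intro!: sfun_closed)
  show "(\<lambda>i. sfun (S i) f (map (\<lambda>a. a i) as)) \<in> seqs S"
    by (rule closed) (use assms(2) in auto)
  have "eventually (\<lambda>i. sfun (S i) f (map (\<lambda>a. urep (ucls S U a) i) as) =
      sfun (S i) f (map (\<lambda>a. a i) as)) \<U>"
    using eventually_map_urep_ucls[OF assms(2)] by (rule eventually_mono) (rule arg_cong)
  moreover have "urep (ucls S U a) \<in> seqs S" if "a \<in> set as" for a
    using that assms(2) sdom_uprod urep_in_seqs by blast
  ultimately show "sfun M f (map (ucls S U) as) = ucls S U (\<lambda>i. sfun (S i) f (map (\<lambda>a. a i) as))"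
    using assms(2) by (simp add: uprod_def comp_def ucls_eq_iff closed subset_eq)
qed

lemma srel_uprod:
  assumes "set as \<subseteq> seqs S"
  shows "srel M r (map (ucls S U) as) \<longleftrightarrow> eventually (\<lambda>i. srel (S i) r (map (\<lambda>a. a i) as)) \<U>"
proof -
  have eq: "eventually (\<lambda>i. srel (S i) r (map (\<lambda>a. urep (ucls S U a) i) as) \<longleftrightarrow>
      srel (S i) r (map (\<lambda>a. a i) as)) \<U>"
    using eventually_map_urep_ucls[OF assms] by (rule eventually_mono) (rule arg_cong)
  have "srel M r (map (ucls S U) as) \<longleftrightarrow>
      eventually (\<lambda>i. srel (S i) r (map (\<lambda>a. urep (ucls S U a) i) as)) \<U>"
    by (simp add: uprod_def comp_def eventually_U)
  also have "\<dots> \<longleftrightarrow> eventually (\<lambda>i. srel (S i) r (map (\<lambda>a. a i) as)) \<U>"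
    using eq by (rule eventually_subst)
  finally show ?thesis .
qed

lemma evalt_uprod:
  assumes "wft fa t" "\<forall>v. E v \<in> seqs S"
  shows "(\<lambda>i. evalt (S i) (\<lambda>v. E v i) t) \<in> seqs S \<and>
    evalt M (\<lambda>v. ucls S U (E v)) t = ucls S U (\<lambda>i. evalt (S i) (\<lambda>v. E v i) t)"
  using assms(1)
proof (induction t)
  case (Var x)
  then show ?case
    using assms(2) by simp
next
  case (Fn f ts)
  define as where "as = map (\<lambda>t i. evalt (S i) (\<lambda>v. E v i) t) ts"
  have seqs: "set as \<subseteq> seqs S" and len: "length as = fa f"
    using Fn by (auto simp: as_def)
  have "map (evalt M (\<lambda>v. ucls S U (E v))) ts = map (ucls S U) as"
    using Fn by (auto simp: as_def)
  then have "evalt M (\<lambda>v. ucls S U (E v)) (Fn f ts) = ucls S U (\<lambda>i. sfun (S i) f (map (\<lambda>a. a i) as))"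
    by (simp only: evalt.simps sfun_uprod(2)[OF len seqs])
  moreover have "map (\<lambda>a. a i) as = map (evalt (S i) (\<lambda>v. E v i)) ts" for i
    by (simp add: as_def)
  ultimately show ?case
    using sfun_uprod(1)[OF len seqs] by simp
qed

lemma sat_uprod_Ex:
  assumes IH: "\<And>b. b \<in> seqs S \<Longrightarrow> sat M ((\<lambda>v. ucls S U (E v))(x := ucls S U b)) p \<longleftrightarrow>
      eventually (\<lambda>i. sat (S i) ((\<lambda>v. E v i)(x := b i)) p) \<U>"
  shows "sat M (\<lambda>v. ucls S U (E v)) (Ex x p) \<longleftrightarrow> eventually (\<lambda>i. sat (S i) (\<lambda>v. E v i) (Ex x p)) \<U>"
proof
  assume "sat M (\<lambda>v. ucls S U (E v)) (Ex x p)"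
  then obtain b where "b \<in> seqs S" "sat M ((\<lambda>v. ucls S U (E v))(x := ucls S U b)) p"
    by (auto simp: sdom_uprod)
  then show "eventually (\<lambda>i. sat (S i) (\<lambda>v. E v i) (Ex x p)) \<U>"
    using IH by (auto simp: seqs_def elim!: eventually_mono)
next
  assume "eventually (\<lambda>i. sat (S i) (\<lambda>v. E v i) (Ex x p)) \<U>"
  then obtain b where "b \<in> seqs S" "eventually (\<lambda>i. sat (S i) ((\<lambda>v. E v i)(x := b i)) p) \<U>"
    using seqs_choice[of "\<lambda>i a. sat (S i) ((\<lambda>v. E v i)(x := a)) p"] by auto
  then show "sat M (\<lambda>v. ucls S U (E v)) (Ex x p)"
    using IH by (auto simp: sdom_uprod)
qed

theorem sat_uprod:
  assumes "wff fa ra p" "\<forall>v. E v \<in> seqs S"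
  shows "sat M (\<lambda>v. ucls S U (E v)) p \<longleftrightarrow> eventually (\<lambda>i. sat (S i) (\<lambda>v. E v i) p) \<U>"
  using assms
proof (induction p arbitrary: E)
  case FF
  then show ?case
    using U_neq_bot by simp
next
  case (Eq s t)
  then show ?case
    using evalt_uprod[of s E] evalt_uprod[of t E] ucls_eq_iff by simp
next
  case (Rel r ts)
  define as where "as = map (\<lambda>t i. evalt (S i) (\<lambda>v. E v i) t) ts"
  have seqs: "set as \<subseteq> seqs S"
    using Rel evalt_uprod by (auto simp: as_def)
  have "map (evalt M (\<lambda>v. ucls S U (E v))) ts = map (ucls S U) as"
    using Rel evalt_uprod by (auto simp: as_def)
  then have "sat M (\<lambda>v. ucls S U (E v)) (Rel r ts) \<longleftrightarrow>
      eventually (\<lambda>i. srel (S i) r (map (\<lambda>a. a i) as)) \<U>"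
    by (simp only: sat.simps srel_uprod[OF seqs])
  moreover have "map (\<lambda>a. a i) as = map (evalt (S i) (\<lambda>v. E v i)) ts" for i
    by (simp add: as_def)
  ultimately show ?case
    by simp
next
  case (Neg p)
  then show ?case
    using not_eventually_U by simp
next
  case (Conj p q)
  then show ?case
    by (simp add: eventually_conj_iff)
next
  case (Ex x p)
  show ?case
  proof (rule sat_uprod_Ex)
    fix b
    assume "b \<in> seqs S"
    then have "\<forall>v. (E(x := b)) v \<in> seqs S"
      using Ex.prems by simp
    moreover have "(\<lambda>v. ucls S U (E v))(x := ucls S U b) = (\<lambda>v. ucls S U ((E(x := b)) v))"
      "(\<lambda>v. E v i)(x := b i) = (\<lambda>v. (E(x := b)) v i)" for i
      by (auto simp: fun_eq_iff)
    ultimately show "sat M ((\<lambda>v. ucls S U (E v))(x := ucls S U b)) p \<longleftrightarrow>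
        eventually (\<lambda>i. sat (S i) ((\<lambda>v. E v i)(x := b i)) p) \<U>"
      using Ex.IH[of "E(x := b)"] Ex.prems(1) by simp
  qed
qed

lemma urep_list_in_tuples: "a \<in> tuples (sdom M) k \<Longrightarrow> urep_list a i \<in> tuples (sdom (S i)) k"
  unfolding tuples_def urep_list_def using urep_in_sdom by auto

lemma sat_uprod_lenv:
  assumes "wff fa ra \<theta>" "fvf \<theta> \<subseteq> {..<length b}" "set b \<subseteq> sdom M"
  shows "sat M (lenv b) \<theta> \<longleftrightarrow> eventually (\<lambda>i. sat (S i) (lenv (urep_list b i)) \<theta>) \<U>"
proof -
  obtain s where s: "s \<in> seqs S"
    using seqs_nonempty by blast
  define E where "E v = (if v < length b then urep (b ! v) else s)" for v
  have E: "\<forall>v. E v \<in> seqs S"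
    unfolding E_def using assms(3) s by (auto intro!: urep_in_seqs)
  have "ucls S U (urep (b ! v)) = b ! v" if "v < length b" for v
    using assms(3) that nth_mem ucls_urep by blast
  then have "sat M (lenv b) \<theta> \<longleftrightarrow> sat M (\<lambda>v. ucls S U (E v)) \<theta>"
    using assms(2) by (intro sat_cong) (auto simp: E_def lenv_def)
  also have "\<dots> \<longleftrightarrow> eventually (\<lambda>i. sat (S i) (\<lambda>v. E v i) \<theta>) \<U>"
    by (rule sat_uprod[OF assms(1) E])
  also have "\<dots> \<longleftrightarrow> eventually (\<lambda>i. sat (S i) (lenv (urep_list b i)) \<theta>) \<U>"
    using assms(2) by (intro eventually_subst always_eventually allI sat_cong)
      (auto simp: E_def lenv_def urep_list_def)
  finally show ?thesis .
qed

lemma sat_uprod_pformula: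
  assumes "pformula fa ra k 0 \<theta>" "b \<in> tuples (sdom M) k"
  shows "sat M (lenv b) \<theta> \<longleftrightarrow> eventually (\<lambda>i. sat (S i) (lenv (urep_list b i)) \<theta>) \<U>"
  using assms by (intro sat_uprod_lenv) (auto simp: pformula_def tuples_def)

lemma uprod_tuple_exists:
  assumes "\<And>i. t i \<in> tuples (sdom (S i)) k"
  shows "\<exists>a\<in>tuples (sdom M) k. eventually (\<lambda>i. urep_list a i = t i) \<U>"
proof -
  have coord: "(\<lambda>i. t i ! j) \<in> seqs S" if "j < k" for j
    using assms that nth_mem by (fastforce simp: seqs_def tuples_def)
  define a where "a = map (\<lambda>j. ucls S U (\<lambda>i. t i ! j)) [0..<k]"
  have "a \<in> tuples (sdom M) k"
    using coord by (auto simp: a_def tuples_def sdom_uprod)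
  moreover have "eventually (\<lambda>i. \<forall>j\<in>{..<k}. urep (ucls S U (\<lambda>i. t i ! j)) i = t i ! j) \<U>"
    using coord by (simp add: eventually_ball_finite eventually_urep_ucls)
  then have "eventually (\<lambda>i. urep_list a i = t i) \<U>"
    by (rule eventually_mono) (use assms in \<open>auto simp: a_def urep_list_def tuples_def
      intro!: nth_equalityI\<close>)
  ultimately show ?thesis ..
qed

lemma eventually_ex_tuple:
  assumes "eventually (\<lambda>i. \<exists>t\<in>tuples (sdom (S i)) k. R i t) \<U>"
  shows "\<exists>a\<in>tuples (sdom M) k. eventually (\<lambda>i. R i (urep_list a i)) \<U>"
proof -
  obtain t where t: "\<forall>i. t i \<in> tuples (sdom (S i)) k" "eventually (\<lambda>i. R i (t i)) \<U>"
    using eventually_choice[OF assms tuples_nonempty[OF sdom_nonempty]] by blast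
  then obtain a where a: "a \<in> tuples (sdom M) k" "eventually (\<lambda>i. urep_list a i = t i) \<U>"
    using uprod_tuple_exists by blast
  have "eventually (\<lambda>i. R i (urep_list a i)) \<U>"
    using t(2) a(2) by eventually_elim simp
  with a(1) show ?thesis ..
qed

lemma eventually_ball_tuples:
  assumes "\<And>a. a \<in> tuples (sdom M) k \<Longrightarrow> eventually (\<lambda>i. R i (urep_list a i)) \<U>"
  shows "eventually (\<lambda>i. \<forall>t\<in>tuples (sdom (S i)) k. R i t) \<U>"
proof (rule ccontr)
  assume "\<not> ?thesis"
  then have "eventually (\<lambda>i. \<exists>t\<in>tuples (sdom (S i)) k. \<not> R i t) \<U>"
    by (simp add: not_eventually_U)
  then obtain a where "a \<in> tuples (sdom M) k" "eventually (\<lambda>i. \<not> R i (urep_list a i)) \<U>"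
    using eventually_ex_tuple[of k "\<lambda>i t. \<not> R i t"] by blast
  with assms show False
    using not_eventually_U by blast
qed

lemma mem_inst_uprod_iff:
  assumes "pformula fa ra k m p" "cs \<in> tuples (sdom M) m" "a \<in> tuples (sdom M) k"
  shows "a \<in> inst M k p cs \<longleftrightarrow> eventually (\<lambda>i. urep_list a i \<in> inst (S i) k p (urep_list cs i)) \<U>"
proof -
  have "a \<in> inst M k p cs \<longleftrightarrow> sat M (lenv (a @ cs)) p"
    using assms(3) by (simp add: inst_def)
  also have "\<dots> \<longleftrightarrow> eventually (\<lambda>i. sat (S i) (lenv (urep_list (a @ cs) i)) p) \<U>"
    using assms by (intro sat_uprod_lenv) (auto simp: pformula_def tuples_def)
  also have "\<dots> \<longleftrightarrow> eventually (\<lambda>i. urep_list a i \<in> inst (S i) k p (urep_list cs i)) \<U>"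
    using urep_list_in_tuples[OF assms(3)] by (simp add: inst_def urep_list_append)
  finally show ?thesis .
qed

lemma inst_uprod_eq_uset:
  assumes "pformula fa ra k m p" "cs \<in> tuples (sdom M) m"
  shows "inst M k p cs = uset S U k (\<lambda>i. inst (S i) k p (urep_list cs i))"
  using mem_inst_uprod_iff[OF assms] inst_subset[of M k p cs]
  unfolding uset_def urep_list_def[symmetric] eventually_U[symmetric] by blast

lemma eventually_eq_if_uset_eq:
  assumes "\<And>i. A i \<subseteq> tuples (sdom (S i)) k" "\<And>i. B i \<subseteq> tuples (sdom (S i)) k"
    and "uset S U k A = uset S U k B"
  shows "eventually (\<lambda>i. A i = B i) \<U>"
proof -
  have "eventually (\<lambda>i. urep_list a i \<in> A i \<longleftrightarrow> urep_list a i \<in> B i) \<U>"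
    if "a \<in> tuples (sdom M) k" for a
    using assms(3) that
    by (intro eventually_iff_U) (auto simp: set_eq_iff uset_def urep_list_def eventually_U)
  then have "eventually (\<lambda>i. \<forall>t\<in>tuples (sdom (S i)) k. t \<in> A i \<longleftrightarrow> t \<in> B i) \<U>"
    by (rule eventually_ball_tuples)
  then show ?thesis
    by (rule eventually_mono) (use assms(1,2) in blast)
qed

lemma eventually_urepr_eq:
  assumes "\<And>i. A i \<subseteq> tuples (sdom (S i)) k" "D = uset S U k A"
  shows "eventually (\<lambda>i. urepr S U k D i = A i) \<U>"
proof -
  have "(\<forall>i. urepr S U k D i \<subseteq> tuples (sdom (S i)) k) \<and> D = uset S U k (urepr S U k D)"
    unfolding urepr_def by (rule someI[of _ A]) (use assms in auto)
  then show ?thesis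
    using assms by (intro eventually_eq_if_uset_eq) auto
qed

lemma inst_uprod_ne_iff:
  assumes "pformula fa ra k m p" "cs \<in> tuples (sdom M) m"
  shows "inst M k p cs \<noteq> {} \<longleftrightarrow> eventually (\<lambda>i. inst (S i) k p (urep_list cs i) \<noteq> {}) \<U>"
proof
  assume "inst M k p cs \<noteq> {}"
  then obtain a where "a \<in> inst M k p cs"
    by blast
  then have "eventually (\<lambda>i. urep_list a i \<in> inst (S i) k p (urep_list cs i)) \<U>"
    using mem_inst_uprod_iff[OF assms] inst_subset by blast
  then show "eventually (\<lambda>i. inst (S i) k p (urep_list cs i) \<noteq> {}) \<U>"
    by (rule eventually_mono) blast
next
  assume "eventually (\<lambda>i. inst (S i) k p (urep_list cs i) \<noteq> {}) \<U>"
  then have "eventually (\<lambda>i. \<exists>t\<in>tuples (sdom (S i)) k. t \<in> inst (S i) k p (urep_list cs i)) \<U>"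
    by (rule eventually_mono) (use inst_subset in blast)
  then obtain a where "a \<in> tuples (sdom M) k"
      "eventually (\<lambda>i. urep_list a i \<in> inst (S i) k p (urep_list cs i)) \<U>"
    using eventually_ex_tuple[of k "\<lambda>i t. t \<in> inst (S i) k p (urep_list cs i)"] by blast
  then show "inst M k p cs \<noteq> {}"
    using mem_inst_uprod_iff[OF assms] by blast
qed

lemma eventually_levels_cover:
  assumes "\<And>j. j \<le> r \<Longrightarrow> pformula fa ra (k + m) 0 (\<theta> j)"
    and "\<And>b. b \<in> tuples (sdom M) (k + m) \<Longrightarrow> \<exists>j\<le>r. sat M (lenv b) (\<theta> j)"
    and "cs \<in> tuples (sdom M) m"
  shows "eventually (\<lambda>i. \<forall>a\<in>tuples (sdom (S i)) k.
    \<exists>j\<le>r. sat (S i) (lenv (a @ urep_list cs i)) (\<theta> j)) \<U>"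
proof (rule eventually_ball_tuples)
  fix a
  assume "a \<in> tuples (sdom M) k"
  then have b: "a @ cs \<in> tuples (sdom M) (k + m)"
    using assms(3) by (rule append_in_tuples)
  then obtain j where "j \<le> r" "sat M (lenv (a @ cs)) (\<theta> j)"
    using assms(2) by blast
  then have "eventually (\<lambda>i. sat (S i) (lenv (urep_list (a @ cs) i)) (\<theta> j)) \<U>"
    using sat_uprod_pformula[OF assms(1) b] by blast
  then show "eventually (\<lambda>i. \<exists>j\<le>r. sat (S i) (lenv (urep_list a i @ urep_list cs i)) (\<theta> j)) \<U>"
    by (rule eventually_mono) (use \<open>j \<le> r\<close> in \<open>auto simp: urep_list_append\<close>)
qed

end

section \<open>Growth exponents\<close>

definition has_exponent :: "'i filter \<Rightarrow> ('i \<Rightarrow> real) \<Rightarrow> ('i \<Rightarrow> real) \<Rightarrow> real \<Rightarrow> bool" where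
  "has_exponent F L x v \<longleftrightarrow>
     (\<forall>e>0. eventually (\<lambda>i. exp (L i * (v - e)) < x i \<and> x i < exp (L i * (v + e))) F)"

lemma abs_ln_div_less_iff:
  fixes L x v e :: real
  assumes "0 < L" "0 < x"
  shows "\<bar>ln x / L - v\<bar> < e \<longleftrightarrow> exp (L * (v - e)) < x \<and> x < exp (L * (v + e))"
proof -
  have "\<bar>ln x / L - v\<bar> < e \<longleftrightarrow> L * (v - e) < ln x \<and> ln x < L * (v + e)"
    using assms(1) by (auto simp: abs_less_iff field_simps)
  also have "\<dots> \<longleftrightarrow> exp (L * (v - e)) < x \<and> x < exp (L * (v + e))"
    using assms(2) by (metis exp_less_cancel_iff exp_ln)
  finally show ?thesis .
qed

lemma has_exponent_iff_tendsto:
  assumes "eventually (\<lambda>i. 0 < L i) F" "eventually (\<lambda>i. 0 < x i) F"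
  shows "has_exponent F L x v \<longleftrightarrow> ((\<lambda>i. ln (x i) / L i) \<longlongrightarrow> v) F"
proof -
  have "eventually (\<lambda>i. \<bar>ln (x i) / L i - v\<bar> < e) F \<longleftrightarrow>
      eventually (\<lambda>i. exp (L i * (v - e)) < x i \<and> x i < exp (L i * (v + e))) F" for e
    using assms by (intro eventually_subst) (auto elim: eventually_elim2 simp: abs_ln_div_less_iff)
  then show ?thesis
    unfolding has_exponent_def tendsto_iff dist_real_def by simp
qed

lemma lg_nonneg: "0 \<le> lg k"
  by (simp add: lg_def)

lemma lg_tendsto_at_top:
  assumes "filterlim f at_top F"
  shows "filterlim (\<lambda>i. lg (f i)) at_top F"
proof -
  have lim: "filterlim (\<lambda>i. ln (real (f i))) at_top F"
    using filterlim_compose[OF ln_at_top filterlim_compose[OF filterlim_real_sequentially assms]]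
    by (simp add: comp_def)
  have "eventually (\<lambda>i. 1 \<le> f i) F"
    using assms by (simp add: filterlim_at_top)
  then have "eventually (\<lambda>i. ln (real (f i)) = lg (f i)) F"
    by (rule eventually_mono) (simp add: lg_def)
  then have "filterlim (\<lambda>i. ln (real (f i))) at_top F = filterlim (\<lambda>i. lg (f i)) at_top F"
    by (rule filterlim_cong[OF refl refl])
  with lim show ?thesis
    by simp
qed

lemma filterlim_at_top_if_ratio_tendsto:
  fixes g L :: "'i \<Rightarrow> real"
  assumes "((\<lambda>i. g i / L i) \<longlongrightarrow> v) F" "filterlim g at_top F" "eventually (\<lambda>i. 0 < L i) F"
  shows "filterlim L at_top F"
  unfolding filterlim_at_top
proof
  fix Z :: real
  have "eventually (\<lambda>i. g i / L i < \<bar>v\<bar> + 1) F"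
    using assms(1) by (rule order_tendstoD) simp
  moreover have "eventually (\<lambda>i. Z * (\<bar>v\<bar> + 1) \<le> g i) F"
    using assms(2) by (simp add: filterlim_at_top)
  ultimately show "eventually (\<lambda>i. Z \<le> L i) F"
    using assms(3)
  proof eventually_elim
    case (elim i)
    then have "Z * (\<bar>v\<bar> + 1) < L i * (\<bar>v\<bar> + 1)"
      by (simp add: divide_less_eq mult.commute)
    then show "Z \<le> L i"
      by (simp add: mult_less_cancel_right_pos add_pos_nonneg)
  qed
qed

lemma has_exponent_card_iff_tendsto:
  assumes "eventually (\<lambda>i. 0 < L i) F" "eventually (\<lambda>i. finite (A i) \<and> A i \<noteq> {}) F"
  shows "has_exponent F L (\<lambda>i. real (card (A i))) v \<longleftrightarrow> ((\<lambda>i. lg (card (A i)) / L i) \<longlongrightarrow> v) F"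
proof -
  have "eventually (\<lambda>i. 0 < real (card (A i))) F"
    using assms(2) by (auto elim: eventually_mono simp: card_gt_0_iff)
  then have "has_exponent F L (\<lambda>i. real (card (A i))) v \<longleftrightarrow>
      ((\<lambda>i. ln (real (card (A i))) / L i) \<longlongrightarrow> v) F"
    using assms(1) by (intro has_exponent_iff_tendsto)
  also have "\<dots> \<longleftrightarrow> ((\<lambda>i. lg (card (A i)) / L i) \<longlongrightarrow> v) F"
    using assms(2) by (intro tendsto_cong) (auto elim: eventually_mono simp: lg_def)
  finally show ?thesis .
qed

lemma has_exponent_pos: "has_exponent F L x v \<Longrightarrow> eventually (\<lambda>i. 0 < x i) F"
  unfolding has_exponent_def
  by (auto elim!: allE[of _ 1] eventually_mono intro: order.strict_trans[OF exp_gt_zero])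

lemma has_exponent_squeeze:
  assumes "eventually (\<lambda>i. x i \<le> y i \<and> y i \<le> z i) F"
    and "has_exponent F L x v" "has_exponent F L z v"
  shows "has_exponent F L y v"
  unfolding has_exponent_def
proof (intro allI impI)
  fix e :: real
  assume "0 < e"
  then have "eventually (\<lambda>i. exp (L i * (v - e)) < x i) F" "eventually (\<lambda>i. z i < exp (L i * (v + e))) F"
    using assms(2,3) unfolding has_exponent_def by (auto elim: eventually_mono)
  with assms(1) show "eventually (\<lambda>i. exp (L i * (v - e)) < y i \<and> y i < exp (L i * (v + e))) F"
    by eventually_elim auto
qed

lemma exp_bounds_add:
  fixes L e v w x y :: real
  assumes e: "0 < e" and L: "2 * ln 2 / e \<le> L"
    and x: "exp (L * (v - e / 2)) < x" "x < exp (L * (v + e / 2))"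
    and y: "exp (L * (w - e / 2)) < y" "y < exp (L * (w + e / 2))"
  shows "exp (L * (max v w - e)) < x + y \<and> x + y < exp (L * (max v w + e))"
proof
  have "0 < 2 * ln 2 / e"
    using e by simp
  then have L0: "0 < L"
    using L by linarith
  have "0 < x" "0 < y"
    using x(1) y(1) exp_gt_zero order.strict_trans by blast+
  have "exp (L * (max v w - e)) < max x y"
  proof (cases "w \<le> v")
    case True
    then have "exp (L * (max v w - e)) < exp (L * (v - e / 2))"
      using e L0 by (simp add: max_def)
    also have "\<dots> < x"
      by (rule x(1))
    finally show ?thesis
      by simp
  next
    case False
    then have "exp (L * (max v w - e)) < exp (L * (w - e / 2))"
      using e L0 by (simp add: max_def)
    also have "\<dots> < y"
      by (rule y(1))
    finally show ?thesis
      by simp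
  qed
  also have "\<dots> \<le> x + y"
    using \<open>0 < x\<close> \<open>0 < y\<close> by simp
  finally show "exp (L * (max v w - e)) < x + y" .
  have "x + y < 2 * exp (L * (max v w + e / 2))"
    using x(2) y(2) L0 by (smt (verit) exp_le_cancel_iff max.cobounded1 max.cobounded2
        mult_left_mono)
  also have "\<dots> \<le> exp (L * e / 2) * exp (L * (max v w + e / 2))"
  proof -
    have "ln 2 \<le> L * e / 2"
      using L e by (simp add: field_simps)
    then have "2 \<le> exp (L * e / 2)"
      by (metis exp_le_cancel_iff exp_ln zero_less_numeral)
    then show ?thesis
      by simp
  qed
  also have "\<dots> = exp (L * (max v w + e))"
    by (simp add: exp_add[symmetric] algebra_simps)
  finally show "x + y < exp (L * (max v w + e))" .
qed

lemma has_exponent_add: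
  assumes L: "filterlim L at_top F"
    and x: "has_exponent F L x v" and y: "has_exponent F L y w"
  shows "has_exponent F L (\<lambda>i. x i + y i) (max v w)"
  unfolding has_exponent_def
proof (intro allI impI)
  fix e :: real
  assume e: "0 < e"
  then have "eventually (\<lambda>i. exp (L i * (v - e / 2)) < x i \<and> x i < exp (L i * (v + e / 2))) F"
      "eventually (\<lambda>i. exp (L i * (w - e / 2)) < y i \<and> y i < exp (L i * (w + e / 2))) F"
    using x y unfolding has_exponent_def by simp_all
  moreover have "eventually (\<lambda>i. 2 * ln 2 / e \<le> L i) F"
    using L by (simp add: filterlim_at_top)
  ultimately show "eventually (\<lambda>i. exp (L i * (max v w - e)) < x i + y i \<and>
      x i + y i < exp (L i * (max v w + e))) F"
    by eventually_elim (use e exp_bounds_add in blast)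
qed

lemma has_exponent_sum:
  assumes L: "filterlim L at_top F"
    and J: "finite J" "J \<noteq> {}" and s: "\<And>j. j \<in> J \<Longrightarrow> has_exponent F L (s j) (v j)"
  shows "has_exponent F L (\<lambda>i. \<Sum>j\<in>J. s j i) (Max (v ` J))"
  using J s
proof (induction J rule: finite_ne_induct)
  case (singleton j)
  then show ?case by simp
next
  case (insert j J)
  then show ?case
    using has_exponent_add[OF L, of "s j" "v j" "\<lambda>i. \<Sum>j\<in>J. s j i"] by simp
qed

lemma sum_between_exp:
  fixes L :: real and f :: "'b \<Rightarrow> real"
  assumes P: "exp (L * (l - e)) < real (card P)" "real (card P) < exp (L * (l + e))"
    and f: "\<forall>a\<in>P. exp (L * (v - e)) < f a \<and> f a < exp (L * (v + e))"
  shows "exp (L * (l + v - 2 * e)) < (\<Sum>a\<in>P. f a) \<and> (\<Sum>a\<in>P. f a) < exp (L * (l + v + 2 * e))"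
proof -
  have "0 < real (card P)"
    by (rule order.strict_trans[OF exp_gt_zero P(1)])
  then have fin: "finite P" "P \<noteq> {}"
    by (simp_all add: card_gt_0_iff)
  have "exp (L * (l + v - 2 * e)) = exp (L * (l - e)) * exp (L * (v - e))"
    by (simp add: exp_add[symmetric] algebra_simps)
  also have "\<dots> < real (card P) * exp (L * (v - e))"
    using P(1) by simp
  also have "\<dots> = (\<Sum>a\<in>P. exp (L * (v - e)))"
    by simp
  also have "\<dots> < (\<Sum>a\<in>P. f a)"
    using fin f by (intro sum_strict_mono) auto
  finally have lower: "exp (L * (l + v - 2 * e)) < (\<Sum>a\<in>P. f a)" .
  have "(\<Sum>a\<in>P. f a) < (\<Sum>a\<in>P. exp (L * (v + e)))"
    using fin f by (intro sum_strict_mono) auto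
  also have "\<dots> = real (card P) * exp (L * (v + e))"
    by simp
  also have "\<dots> < exp (L * (l + e)) * exp (L * (v + e))"
    using P(2) by simp
  also have "\<dots> = exp (L * (l + v + 2 * e))"
    by (simp add: exp_add[symmetric] algebra_simps)
  finally show ?thesis
    using lower by blast
qed

lemma has_exponent_sum_fibres:
  assumes P: "has_exponent F L (\<lambda>i. real (card (P i))) l"
    and f: "\<And>e. 0 < e \<Longrightarrow>
      eventually (\<lambda>i. \<forall>a\<in>P i. exp (L i * (v - e)) < f i a \<and> f i a < exp (L i * (v + e))) F"
  shows "has_exponent F L (\<lambda>i. \<Sum>a\<in>P i. f i a) (l + v)"
  unfolding has_exponent_def
proof (intro allI impI)
  fix e :: real
  assume "0 < e"
  then have "eventually (\<lambda>i. exp (L i * (l - e / 2)) < real (card (P i)) \<and>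
      real (card (P i)) < exp (L i * (l + e / 2))) F"
    using P unfolding has_exponent_def by simp
  moreover have "eventually (\<lambda>i. \<forall>a\<in>P i. exp (L i * (v - e / 2)) < f i a \<and>
      f i a < exp (L i * (v + e / 2))) F"
    using f \<open>0 < e\<close> by simp
  ultimately show "eventually (\<lambda>i. exp (L i * (l + v - e)) < (\<Sum>a\<in>P i. f i a) \<and>
      (\<Sum>a\<in>P i. f i a) < exp (L i * (l + v + e))) F"
  proof eventually_elim
    case (elim i)
    then show ?case
      using sum_between_exp[of "L i" l "e / 2" "P i" v "f i"] by simp
  qed
qed

lemma sum_le_sum_cover:
  fixes f :: "'b \<Rightarrow> real" and r :: nat
  assumes T: "finite T" and P: "\<And>j. j \<le> r \<Longrightarrow> P j \<subseteq> T"
    and nonneg: "\<And>a. a \<in> T \<Longrightarrow> 0 \<le> f a"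
    and cover: "\<And>a. a \<in> T \<Longrightarrow> 0 < f a \<Longrightarrow> \<exists>j\<le>r. a \<in> P j"
  shows "(\<Sum>a\<in>T. f a) \<le> (\<Sum>j\<le>r. \<Sum>a\<in>P j. f a)"
proof -
  have "(\<Sum>a\<in>T. f a) \<le> (\<Sum>a\<in>T. \<Sum>j\<le>r. if a \<in> P j then f a else 0)"
  proof (rule sum_mono)
    fix a
    assume a: "a \<in> T"
    show "f a \<le> (\<Sum>j\<le>r. if a \<in> P j then f a else 0)"
    proof (cases "0 < f a")
      case True
      then obtain j where j: "j \<le> r" "a \<in> P j"
        using cover a by blast
      then have "f a = (if a \<in> P j then f a else 0)"
        by simp
      also have "\<dots> \<le> (\<Sum>j\<le>r. if a \<in> P j then f a else 0)"
        using j nonneg[OF a] by (intro member_le_sum) auto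
      finally show ?thesis .
    next
      case False
      then show ?thesis
        using nonneg[OF a] by (simp add: sum_nonneg)
    qed
  qed
  also have "\<dots> = (\<Sum>j\<le>r. \<Sum>a\<in>T. if a \<in> P j then f a else 0)"
    by (rule sum.swap)
  also have "\<dots> = (\<Sum>j\<le>r. \<Sum>a\<in>P j. f a)"
  proof (rule sum.cong[OF refl])
    fix j
    assume "j \<in> {..r}"
    then have "T \<inter> P j = P j"
      using P by auto
    then show "(\<Sum>a\<in>T. if a \<in> P j then f a else 0) = (\<Sum>a\<in>P j. f a)"
      using sum.inter_restrict[OF T, of f "P j"] by simp
  qed
  finally show ?thesis .
qed

lemma has_exponent_sum_cover:
  fixes f :: "'i \<Rightarrow> 'b \<Rightarrow> real" and l :: "nat \<Rightarrow> real"
  assumes L: "filterlim L at_top F"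
    and T: "\<And>i. finite (T i)" and nonneg: "\<And>i a. 0 \<le> f i a"
    and P: "\<And>j i. j \<le> r \<Longrightarrow> P j i \<subseteq> T i"
    and cover: "eventually (\<lambda>i. \<forall>a\<in>T i. 0 < f i a \<longrightarrow> (\<exists>j\<le>r. a \<in> P j i)) F"
    and fibres: "\<And>j e. j \<le> r \<Longrightarrow> 0 < e \<Longrightarrow> eventually (\<lambda>i. \<forall>a\<in>P j i.
        exp (L i * (real j - e)) < f i a \<and> f i a < exp (L i * (real j + e))) F"
    and J: "J \<subseteq> {..r}" "J \<noteq> {}"
    and pieces: "\<And>j. j \<in> J \<Longrightarrow> has_exponent F L (\<lambda>i. real (card (P j i))) (l j)"
    and empty: "\<And>j. j \<le> r \<Longrightarrow> j \<notin> J \<Longrightarrow> eventually (\<lambda>i. P j i = {}) F"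
  shows "has_exponent F L (\<lambda>i. \<Sum>a\<in>T i. f i a) (Max ((\<lambda>j. l j + real j) ` J))"
proof -
  define s where "s j i = (\<Sum>a\<in>P j i. f i a)" for j i
  have finJ: "finite J"
    using J(1) finite_subset by blast
  have s: "has_exponent F L (s j) (l j + real j)" if "j \<in> J" for j
    unfolding s_def using J(1) that by (intro has_exponent_sum_fibres pieces fibres) auto
  have "Max ((\<lambda>j. l j + real j) ` J) \<in> (\<lambda>j. l j + real j) ` J"
    using finJ J(2) by (simp add: Max_in)
  then obtain j0 where j0: "j0 \<in> J" "l j0 + real j0 = Max ((\<lambda>j. l j + real j) ` J)"
    by (metis (no_types, lifting) imageE)
  have "eventually (\<lambda>i. \<forall>j\<in>{..r} - J. P j i = {}) F"
    using empty by (simp add: eventually_ball_finite)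
  with cover have "eventually (\<lambda>i. s j0 i \<le> (\<Sum>a\<in>T i. f i a) \<and> (\<Sum>a\<in>T i. f i a) \<le> (\<Sum>j\<in>J. s j i)) F"
  proof eventually_elim
    case (elim i)
    have "s j0 i \<le> (\<Sum>a\<in>T i. f i a)"
      unfolding s_def using j0(1) J(1) P T nonneg by (intro sum_mono2) auto
    moreover have "(\<Sum>a\<in>T i. f i a) \<le> (\<Sum>j\<le>r. s j i)"
      unfolding s_def using elim(1) T P nonneg by (intro sum_le_sum_cover) auto
    moreover have "(\<Sum>j\<le>r. s j i) = (\<Sum>j\<in>J. s j i)"
      using elim(2) J(1) by (intro sum.mono_neutral_right) (auto simp: s_def)
    ultimately show ?case
      by simp
  qed
  moreover have "has_exponent F L (s j0) (Max ((\<lambda>j. l j + real j) ` J))"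
    using s[OF j0(1)] j0(2) by simp
  moreover have "has_exponent F L (\<lambda>i. \<Sum>j\<in>J. s j i) (Max ((\<lambda>j. l j + real j) ` J))"
    using L finJ J(2) s by (rule has_exponent_sum)
  ultimately show ?thesis
    by (rule has_exponent_squeeze)
qed

lemma Max_if_zero_eq:
  fixes g :: "nat \<Rightarrow> nat"
  assumes "finite I" "J \<subseteq> I" "J \<noteq> {}"
  shows "real (Max ((\<lambda>j. if j \<in> J then g j else 0) ` I)) = Max ((\<lambda>j. real (g j)) ` J)"
proof -
  have "finite J"
    using assms(1,2) finite_subset by blast
  have "Max ((\<lambda>j. if j \<in> J then g j else 0) ` I) = Max (g ` J)"
  proof (rule antisym)
    show "Max ((\<lambda>j. if j \<in> J then g j else 0) ` I) \<le> Max (g ` J)"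
      using assms \<open>finite J\<close> by (intro Max.boundedI) auto
    show "Max (g ` J) \<le> Max ((\<lambda>j. if j \<in> J then g j else 0) ` I)"
      using assms \<open>finite J\<close> by (intro Max.boundedI) (auto intro!: Max_ge)
  qed
  also have "real (Max (g ` J)) = Max (real ` g ` J)"
    using \<open>finite J\<close> assms(3) by (intro mono_Max_commute) (auto simp: mono_def)
  finally show ?thesis
    by (simp add: image_image)
qed

section \<open>Pseudofinite dimension\<close>

locale pseudofinite = ultraproduct +
  assumes finite_sdom: "\<And>i. finite (sdom (S i))"
begin

lemma finite_inst: "finite (inst (S i) k p c)"
  using finite_subset[OF inst_subset finite_tuples[OF finite_sdom]] .

lemma card_sdom_tendsto:
  assumes "infinite (sdom M)"
  shows "filterlim (\<lambda>i. card (sdom (S i))) at_top \<U>"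
  unfolding filterlim_at_top
proof
  fix B
  obtain F where F: "F \<subseteq> sdom M" "finite F" "card F = B"
    using infinite_arbitrarily_large[OF assms] by blast
  have "eventually (\<lambda>i. \<forall>c\<in>F. \<forall>d\<in>F. c \<noteq> d \<longrightarrow> urep c i \<noteq> urep d i) \<U>"
  proof -
    have "eventually (\<lambda>i. urep c i \<noteq> urep d i) \<U>" if "c \<in> F" "d \<in> F" "c \<noteq> d" for c d
      using that F(1) ucls_eq_iff[of "urep c" "urep d"] urep_in_seqs ucls_urep not_eventually_U
      by (metis subsetD)
    then show ?thesis
      using F(2) by (auto simp: eventually_ball_finite_distrib intro!: eventually_ball_finite)
  qed
  then show "eventually (\<lambda>i. B \<le> card (sdom (S i))) \<U>"
  proof (rule eventually_mono)
    fix i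
    assume "\<forall>c\<in>F. \<forall>d\<in>F. c \<noteq> d \<longrightarrow> urep c i \<noteq> urep d i"
    then have "inj_on (\<lambda>c. urep c i) F"
      by (meson inj_onI)
    moreover have "(\<lambda>c. urep c i) ` F \<subseteq> sdom (S i)"
      using F(1) urep_in_sdom by blast
    ultimately show "B \<le> card (sdom (S i))"
      using F(3) card_inj_on_le finite_sdom by blast
  qed
qed

end

locale pseudofinite_dimension = pseudofinite U fa ra S
  for U :: "'i set set" and fa :: "'f \<Rightarrow> nat" and ra :: "'r \<Rightarrow> nat"
    and S :: "'i \<Rightarrow> ('f, 'r, 'a) struc" +
  fixes n :: nat and X :: "('i \<Rightarrow> 'a) set list set"
begin

abbreviation \<delta> :: "nat \<Rightarrow> ('i \<Rightarrow> 'a) set list set \<Rightarrow> ereal" where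
  "\<delta> k A \<equiv> udelta S U n X k A"

definition lgX :: "'i \<Rightarrow> real" where
  "lgX i = lg (card (urepr S U n X i))"

lemma delta_inst_eq_ereal_iff:
  assumes "pformula fa ra k m p" "cs \<in> tuples (sdom M) m"
  shows "\<delta> k (inst M k p cs) = ereal v \<longleftrightarrow>
    ((\<lambda>i. lg (card (inst (S i) k p (urep_list cs i))) / lgX i) \<longlongrightarrow> v) \<U>"
proof -
  have "eventually (\<lambda>i. urepr S U k (inst M k p cs) i = inst (S i) k p (urep_list cs i)) \<U>"
    by (rule eventually_urepr_eq[OF inst_subset inst_uprod_eq_uset[OF assms]])
  then have "\<delta> k (inst M k p cs) = ulim U (\<lambda>i. lg (card (inst (S i) k p (urep_list cs i))) / lgX i)"
    unfolding udelta_def lgX_def by (intro ulim_cong) (auto elim: eventually_mono)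
  then show ?thesis
    by (simp add: ulim_eq_ereal_iff)
qed

lemma eventually_fibre_ratios:
  assumes p: "pformula fa ra 1 (k + m) p" and \<theta>: "pformula fa ra (k + m) 0 \<theta>"
    and \<theta>_delta: "\<And>b. b \<in> tuples (sdom M) (k + m) \<Longrightarrow> sat M (lenv b) \<theta> \<Longrightarrow>
      \<delta> 1 (inst M 1 p b) = ereal v"
    and cs: "cs \<in> tuples (sdom M) m" and e: "0 < e"
  shows "eventually (\<lambda>i. \<forall>a\<in>tuples (sdom (S i)) k. sat (S i) (lenv (a @ urep_list cs i)) \<theta> \<longrightarrow>
    \<bar>lg (card (inst (S i) 1 p (a @ urep_list cs i))) / lgX i - v\<bar> < e) \<U>"
proof (rule eventually_ball_tuples)
  fix a
  assume "a \<in> tuples (sdom M) k"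
  then have b: "a @ cs \<in> tuples (sdom M) (k + m)"
    using cs by (rule append_in_tuples)
  show "eventually (\<lambda>i. sat (S i) (lenv (urep_list a i @ urep_list cs i)) \<theta> \<longrightarrow>
    \<bar>lg (card (inst (S i) 1 p (urep_list a i @ urep_list cs i))) / lgX i - v\<bar> < e) \<U>"
  proof (cases "sat M (lenv (a @ cs)) \<theta>")
    case True
    then have "((\<lambda>i. lg (card (inst (S i) 1 p (urep_list (a @ cs) i))) / lgX i) \<longlongrightarrow> v) \<U>"
      by (intro delta_inst_eq_ereal_iff[OF p b, THEN iffD1] \<theta>_delta[OF b])
    then have "eventually (\<lambda>i. \<bar>lg (card (inst (S i) 1 p (urep_list (a @ cs) i))) / lgX i - v\<bar> < e) \<U>"
      using e by (simp add: tendsto_iff dist_real_def)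
    then show ?thesis
      by (rule eventually_mono) (simp add: urep_list_append)
  next
    case False
    then have "eventually (\<lambda>i. \<not> sat (S i) (lenv (urep_list (a @ cs) i)) \<theta>) \<U>"
      using sat_uprod_pformula[OF \<theta> b] not_eventually_U by blast
    then show ?thesis
      by (rule eventually_mono) (simp add: urep_list_append)
  qed
qed

context
  fixes k m r :: nat and p :: "('f, 'r) form" and \<theta> :: "nat \<Rightarrow> ('f, 'r) form"
    and cs :: "('i \<Rightarrow> 'a) set list"
  assumes p: "pformula fa ra (Suc k) m p" and cs: "cs \<in> tuples (sdom M) m"
    and \<theta>: "\<And>j. j \<le> r \<Longrightarrow> pformula fa ra (k + m) 0 (\<theta> j)"
    and \<theta>_cover: "\<And>b. b \<in> tuples (sdom M) (k + m) \<Longrightarrow> \<exists>j\<le>r. sat M (lenv b) (\<theta> j)"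
    and \<theta>_delta: "\<And>j b. j \<le> r \<Longrightarrow> b \<in> tuples (sdom M) (k + m) \<Longrightarrow> sat M (lenv b) (\<theta> j) \<Longrightarrow>
      \<delta> 1 (inst M 1 p b) = ereal (real j)"
begin

lemma inst_pieces_eq:
  assumes "j \<le> r"
  shows "inst (S i) k (ex_first_and (k + m) p (\<theta> j)) (urep_list cs i) =
    {a \<in> tuples (sdom (S i)) k. 0 < card (inst (S i) 1 p (a @ urep_list cs i)) \<and>
      sat (S i) (lenv (a @ urep_list cs i)) (\<theta> j)}"
  unfolding inst_ex_first_and[OF p \<theta>[OF assms]] using finite_inst by (auto simp: card_gt_0_iff)

lemma eventually_pieces_cover:
  "eventually (\<lambda>i. \<forall>a\<in>tuples (sdom (S i)) k. 0 < real (card (inst (S i) 1 p (a @ urep_list cs i))) \<longrightarrow>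
     (\<exists>j\<le>r. a \<in> inst (S i) k (ex_first_and (k + m) p (\<theta> j)) (urep_list cs i))) \<U>"
  using eventually_levels_cover[OF \<theta> \<theta>_cover cs]
proof (rule eventually_mono)
  fix i
  assume cover: "\<forall>a\<in>tuples (sdom (S i)) k. \<exists>j\<le>r. sat (S i) (lenv (a @ urep_list cs i)) (\<theta> j)"
  show "\<forall>a\<in>tuples (sdom (S i)) k. 0 < real (card (inst (S i) 1 p (a @ urep_list cs i))) \<longrightarrow>
     (\<exists>j\<le>r. a \<in> inst (S i) k (ex_first_and (k + m) p (\<theta> j)) (urep_list cs i))"
  proof (intro ballI impI)
    fix a
    assume a: "a \<in> tuples (sdom (S i)) k" "0 < real (card (inst (S i) 1 p (a @ urep_list cs i)))"
    then obtain j where "j \<le> r" "sat (S i) (lenv (a @ urep_list cs i)) (\<theta> j)"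
      using cover by blast
    then show "\<exists>j\<le>r. a \<in> inst (S i) k (ex_first_and (k + m) p (\<theta> j)) (urep_list cs i)"
      using a inst_pieces_eq[of j i] by auto
  qed
qed

lemma eventually_pieces_fibres:
  assumes "eventually (\<lambda>i. 0 < lgX i) \<U>" "j \<le> r" "0 < e"
  shows "eventually (\<lambda>i. \<forall>a\<in>inst (S i) k (ex_first_and (k + m) p (\<theta> j)) (urep_list cs i).
    exp (lgX i * (real j - e)) < real (card (inst (S i) 1 p (a @ urep_list cs i))) \<and>
    real (card (inst (S i) 1 p (a @ urep_list cs i))) < exp (lgX i * (real j + e))) \<U>"
proof -
  have "pformula fa ra 1 (k + m) p"
    using p by (simp add: pformula_def)
  then have "eventually (\<lambda>i. \<forall>a\<in>tuples (sdom (S i)) k. sat (S i) (lenv (a @ urep_list cs i)) (\<theta> j) \<longrightarrow>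
      \<bar>lg (card (inst (S i) 1 p (a @ urep_list cs i))) / lgX i - real j\<bar> < e) \<U>"
    by (rule eventually_fibre_ratios[OF _ \<theta>[OF assms(2)] _ cs assms(3)]) (rule \<theta>_delta[OF assms(2)])
  with assms(1) show ?thesis
  proof eventually_elim
    case (elim i)
    show ?case
    proof
      fix a
      let ?F = "inst (S i) 1 p (a @ urep_list cs i)"
      assume "a \<in> inst (S i) k (ex_first_and (k + m) p (\<theta> j)) (urep_list cs i)"
      then have a: "a \<in> tuples (sdom (S i)) k" "0 < card ?F" "sat (S i) (lenv (a @ urep_list cs i)) (\<theta> j)"
        by (simp_all add: inst_pieces_eq[OF assms(2)])
      then have "\<bar>lg (card ?F) / lgX i - real j\<bar> < e"
        using elim(2) by blast
      then have "\<bar>ln (card ?F) / lgX i - real j\<bar> < e"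
        using a(2) by (simp add: lg_def)
      then show "exp (lgX i * (real j - e)) < real (card ?F) \<and> real (card ?F) < exp (lgX i * (real j + e))"
        using abs_ln_div_less_iff[of "lgX i" "card ?F" "real j" e] elim(1) a(2) by simp
    qed
  qed
qed

lemma eventually_card_inst_Suc_eq_0:
  assumes "\<And>j. j \<le> r \<Longrightarrow> inst M k (ex_first_and (k + m) p (\<theta> j)) cs = {}"
  shows "eventually (\<lambda>i. card (inst (S i) (Suc k) p (urep_list cs i)) = 0) \<U>"
proof -
  have "eventually (\<lambda>i. \<forall>j\<in>{..r}. inst (S i) k (ex_first_and (k + m) p (\<theta> j)) (urep_list cs i) = {}) \<U>"
    using assms inst_uprod_ne_iff[OF pformula_ex_first_and[OF p \<theta>] cs] not_eventually_U
    by (auto simp: eventually_ball_finite)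
  with eventually_pieces_cover show ?thesis
  proof eventually_elim
    case (elim i)
    then have "\<forall>a\<in>tuples (sdom (S i)) k. card (inst (S i) 1 p (a @ urep_list cs i)) = 0"
      by auto
    then show ?case
      unfolding card_inst_Suc[OF finite_sdom] by simp
  qed
qed

lemma has_exponent_card_inst_Suc:
  assumes L: "filterlim lgX at_top \<U>"
    and pieces: "\<And>j. j \<le> r \<Longrightarrow>
      \<delta> k (inst M k (ex_first_and (k + m) p (\<theta> j)) cs) = ereal (real (l j))"
    and J: "J = {j. j \<le> r \<and> inst M k (ex_first_and (k + m) p (\<theta> j)) cs \<noteq> {}}" "J \<noteq> {}"
  shows "has_exponent \<U> lgX (\<lambda>i. real (card (inst (S i) (Suc k) p (urep_list cs i))))
    (Max ((\<lambda>j. real (l j) + real j) ` J))"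
proof -
  define P where "P j i = inst (S i) k (ex_first_and (k + m) p (\<theta> j)) (urep_list cs i)" for j i
  have L0: "eventually (\<lambda>i. 0 < lgX i) \<U>"
    using L by (simp add: filterlim_at_top_dense)
  have J_iff: "j \<in> J \<longleftrightarrow> j \<le> r \<and> eventually (\<lambda>i. P j i \<noteq> {}) \<U>" for j
    unfolding J(1) P_def using inst_uprod_ne_iff[OF pformula_ex_first_and[OF p \<theta>] cs] by blast
  have pieces_exponent: "has_exponent \<U> lgX (\<lambda>i. real (card (P j i))) (real (l j))" if "j \<in> J" for j
  proof -
    have "eventually (\<lambda>i. finite (P j i) \<and> P j i \<noteq> {}) \<U>"
      using J_iff that finite_inst by (auto elim: eventually_mono simp: P_def)
    moreover have "((\<lambda>i. lg (card (P j i)) / lgX i) \<longlongrightarrow> real (l j)) \<U>"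
      unfolding P_def using J_iff that pieces
      by (intro delta_inst_eq_ereal_iff[OF pformula_ex_first_and[OF p \<theta>] cs, THEN iffD1]) auto
    ultimately show ?thesis
      using has_exponent_card_iff_tendsto[OF L0] by blast
  qed
  have empty: "eventually (\<lambda>i. P j i = {}) \<U>" if "j \<le> r" "j \<notin> J" for j
    using that J_iff not_eventually_U by auto
  have "has_exponent \<U> lgX (\<lambda>i. \<Sum>a\<in>tuples (sdom (S i)) k. real (card (inst (S i) 1 p (a @ urep_list cs i))))
      (Max ((\<lambda>j. real (l j) + real j) ` J))"
    using eventually_pieces_cover eventually_pieces_fibres[OF L0]
    by (intro has_exponent_sum_cover[OF L _ _ _ _ _ _ J(2) pieces_exponent empty])
      (auto simp: P_def J(1) finite_tuples finite_sdom inst_subset)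
  then show ?thesis
    unfolding card_inst_Suc[OF finite_sdom] of_nat_sum .
qed

lemma delta_inst_Suc:
  assumes L: "filterlim lgX at_top \<U>"
    and pieces: "\<And>j. j \<le> r \<Longrightarrow>
      \<delta> k (inst M k (ex_first_and (k + m) p (\<theta> j)) cs) = ereal (real (l j))"
  defines "J \<equiv> {j. j \<le> r \<and> inst M k (ex_first_and (k + m) p (\<theta> j)) cs \<noteq> {}}"
  shows "\<delta> (Suc k) (inst M (Suc k) p cs) = ereal (real (Max ((\<lambda>j. if j \<in> J then l j + j else 0) ` {..r})))"
proof (cases "J = {}")
  case True
  then have "eventually (\<lambda>i. card (inst (S i) (Suc k) p (urep_list cs i)) = 0) \<U>"
    by (intro eventually_card_inst_Suc_eq_0) (auto simp: J_def)
  then have "eventually (\<lambda>i. lg (card (inst (S i) (Suc k) p (urep_list cs i))) / lgX i = 0) \<U>"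
    by (rule eventually_mono) (simp add: lg_def)
  then show ?thesis
    using True by (simp add: delta_inst_eq_ereal_iff[OF p cs] tendsto_eventually)
next
  case False
  let ?N = "\<lambda>i. inst (S i) (Suc k) p (urep_list cs i)"
  have exponent: "has_exponent \<U> lgX (\<lambda>i. real (card (?N i))) (Max ((\<lambda>j. real (l j) + real j) ` J))"
    by (rule has_exponent_card_inst_Suc[OF L pieces J_def[THEN meta_eq_to_obj_eq] False])
  have "eventually (\<lambda>i. finite (?N i) \<and> ?N i \<noteq> {}) \<U>"
    using has_exponent_pos[OF exponent] finite_inst by (auto elim: eventually_mono)
  moreover have "eventually (\<lambda>i. 0 < lgX i) \<U>"
    using L by (simp add: filterlim_at_top_dense)
  ultimately have lim: "((\<lambda>i. lg (card (?N i)) / lgX i) \<longlongrightarrow> Max ((\<lambda>j. real (l j) + real j) ` J)) \<U>"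
    using has_exponent_card_iff_tendsto[of lgX \<U> ?N] exponent by blast
  have "J \<subseteq> {..r}"
    by (auto simp: J_def)
  then have "real (Max ((\<lambda>j. if j \<in> J then l j + j else 0) ` {..r})) = Max ((\<lambda>j. real (l j) + real j) ` J)"
    using Max_if_zero_eq[of "{..r}" J "\<lambda>j. l j + j"] False by simp
  with lim show ?thesis
    by (simp add: delta_inst_eq_ereal_iff[OF p cs])
qed

end

text \<open>\<open>delta_levels k b\<close>: the conclusion of the theorem for formulas with \<open>k\<close> object
  variables, with \<open>b\<close> in place of \<open>k * r\<close>.\<close>

definition delta_levels :: "nat \<Rightarrow> nat \<Rightarrow> bool" where
  "delta_levels k b \<longleftrightarrow> (\<forall>p m. pformula fa ra k m p \<longrightarrow> (\<exists>g. definable_fun fa ra M m g \<and>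
     (\<forall>cs\<in>tuples (sdom M) m. g cs \<le> b \<and> \<delta> k (inst M k p cs) = ereal (g cs))))"

lemma delta_levelsD:
  "delta_levels k b \<Longrightarrow> pformula fa ra k m p \<Longrightarrow> \<exists>g. definable_fun fa ra M m g \<and>
     (\<forall>cs\<in>tuples (sdom M) m. g cs \<le> b \<and> \<delta> k (inst M k p cs) = ereal (g cs))"
  by (simp add: delta_levels_def)

lemma delta_levels_choice:
  assumes "delta_levels k b" "\<And>j. pformula fa ra k m (\<chi> j)"
  shows "\<exists>g. \<forall>j. definable_fun fa ra M m (g j) \<and>
    (\<forall>cs\<in>tuples (sdom M) m. g j cs \<le> b \<and> \<delta> k (inst M k (\<chi> j) cs) = ereal (g j cs))"
proof -
  have "\<forall>j. \<exists>g. definable_fun fa ra M m g \<and>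
      (\<forall>cs\<in>tuples (sdom M) m. g cs \<le> b \<and> \<delta> k (inst M k (\<chi> j) cs) = ereal (g cs))"
    using delta_levelsD[OF assms(1)] assms(2) by blast
  then show ?thesis
    by (rule choice)
qed

lemma delta_levelsI:
  assumes vals: "\<And>p m cs. pformula fa ra k m p \<Longrightarrow> cs \<in> tuples (sdom M) m \<Longrightarrow>
      \<delta> k (inst M k p cs) \<in> {ereal (real j) | j. j \<le> b}"
    and defs: "\<And>p m j. pformula fa ra k m p \<Longrightarrow> j \<le> b \<Longrightarrow>
      definable0 fa ra M m {cs \<in> tuples (sdom M) m. \<delta> k (inst M k p cs) = ereal (real j)}"
  shows "delta_levels k b"
  unfolding delta_levels_def
proof (intro allI impI)
  fix p m
  assume p: "pformula fa ra k m p"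
  define g where "g cs = (SOME j. j \<le> b \<and> \<delta> k (inst M k p cs) = ereal (real j))" for cs
  have g: "g cs \<le> b \<and> \<delta> k (inst M k p cs) = ereal (g cs)" if "cs \<in> tuples (sdom M) m" for cs
    unfolding g_def by (rule someI_ex) (use vals[OF p that] in blast)
  have "{cs \<in> tuples (sdom M) m. g cs = l} =
      (if l \<le> b then {cs \<in> tuples (sdom M) m. \<delta> k (inst M k p cs) = ereal (real l)} else {})" for l
    using g by auto
  then have "definable_fun fa ra M m g"
    unfolding definable_fun_def using defs[OF p] by (simp add: definable0_empty)
  with g show "\<exists>g. definable_fun fa ra M m g \<and>
      (\<forall>cs\<in>tuples (sdom M) m. g cs \<le> b \<and> \<delta> k (inst M k p cs) = ereal (g cs))"
    by blast
qed

lemma delta_levels_values: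
  "delta_levels k b \<Longrightarrow> pformula fa ra k m p \<Longrightarrow> cs \<in> tuples (sdom M) m \<Longrightarrow>
    \<delta> k (inst M k p cs) \<in> {ereal (real j) | j. j \<le> b}"
  using delta_levelsD by blast

text \<open>If \<open>|X\<^sub>i| \<le> 1\<close> almost always then \<open>lgX\<close> vanishes, and every \<open>\<delta>\<^sub>X\<close> is \<open>0\<close> by the
  convention \<open>x / 0 = 0\<close>.\<close>

lemma delta_levels_degenerate:
  assumes "eventually (\<lambda>i. lgX i = 0) \<U>"
  shows "delta_levels k b"
  unfolding delta_levels_def
proof (intro allI impI exI[of _ "\<lambda>cs. 0"] conjI ballI)
  fix p m cs
  assume "pformula fa ra k m p" "cs \<in> tuples (sdom M) m"
  moreover have "((\<lambda>i. lg (card (inst (S i) k p (urep_list cs i))) / lgX i) \<longlongrightarrow> 0) \<U>"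
    using assms by (intro tendsto_eventually) (auto elim: eventually_mono)
  ultimately show "\<delta> k (inst M k p cs) = ereal (real 0)"
    by (simp add: delta_inst_eq_ereal_iff)
qed (simp_all add: definable_fun_const)

lemma delta_levels_0: "delta_levels 0 0"
  unfolding delta_levels_def
proof (intro allI impI exI[of _ "\<lambda>cs. 0"] conjI ballI)
  fix p m cs
  assume p: "pformula fa ra 0 m p" and cs: "cs \<in> tuples (sdom M) m"
  have "lg (card (inst (S i) 0 p c)) = 0" for i c
  proof -
    have "card (inst (S i) 0 p c) \<le> 1"
      using card_mono[OF _ inst_subset[of "S i" 0 p c]] by (simp add: tuples_0)
    then show ?thesis
      by (auto simp: lg_def le_Suc_eq)
  qed
  then show "\<delta> 0 (inst M 0 p cs) = ereal (real 0)"
    by (simp add: delta_inst_eq_ereal_iff[OF p cs])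
qed (simp_all add: definable_fun_const)

lemma delta_levels_1_formulas:
  assumes "delta_levels 1 r" "pformula fa ra 1 m p"
  shows "\<exists>\<theta>. (\<forall>j. pformula fa ra m 0 (\<theta> j)) \<and>
    (\<forall>b\<in>tuples (sdom M) m. \<exists>j\<le>r. sat M (lenv b) (\<theta> j)) \<and>
    (\<forall>j. \<forall>b\<in>tuples (sdom M) m. sat M (lenv b) (\<theta> j) \<longrightarrow> \<delta> 1 (inst M 1 p b) = ereal (real j))"
proof -
  obtain g where g: "definable_fun fa ra M m g"
    "\<forall>b\<in>tuples (sdom M) m. g b \<le> r \<and> \<delta> 1 (inst M 1 p b) = ereal (g b)"
    using delta_levelsD[OF assms] by blast
  have "\<forall>j. \<exists>\<theta>. pformula fa ra m 0 \<theta> \<and>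
      {b \<in> tuples (sdom M) m. g b = j} = {b \<in> tuples (sdom M) m. sat M (lenv b) \<theta>}"
    using g(1) unfolding definable_fun_def definable0_def by blast
  then obtain \<theta> where "\<forall>j. pformula fa ra m 0 (\<theta> j) \<and>
      {b \<in> tuples (sdom M) m. g b = j} = {b \<in> tuples (sdom M) m. sat M (lenv b) (\<theta> j)}"
    by (rule choice[THEN exE])
  then have "\<forall>j. pformula fa ra m 0 (\<theta> j)"
    and \<theta>_sat: "\<And>j b. b \<in> tuples (sdom M) m \<Longrightarrow> g b = j \<longleftrightarrow> sat M (lenv b) (\<theta> j)"
    by blast+
  moreover have "\<forall>b\<in>tuples (sdom M) m. \<exists>j\<le>r. sat M (lenv b) (\<theta> j)"
  proof
    fix b
    assume "b \<in> tuples (sdom M) m"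
    then show "\<exists>j\<le>r. sat M (lenv b) (\<theta> j)"
      using g(2) \<theta>_sat[of b "g b"] by blast
  qed
  ultimately show ?thesis
    using g(2) by (intro exI[of _ \<theta>]) auto
qed

lemma delta_levels_Suc:
  assumes L: "filterlim lgX at_top \<U>" and one: "delta_levels 1 r" and IH: "delta_levels k b"
  shows "delta_levels (Suc k) (b + r)"
  unfolding delta_levels_def
proof (intro allI impI)
  fix p m
  assume p: "pformula fa ra (Suc k) m p"
  then have "pformula fa ra 1 (k + m) p"
    by (simp add: pformula_def)
  then obtain \<theta> where \<theta>: "\<forall>j. pformula fa ra (k + m) 0 (\<theta> j)"
    "\<forall>b\<in>tuples (sdom M) (k + m). \<exists>j\<le>r. sat M (lenv b) (\<theta> j)"
    "\<forall>j. \<forall>b\<in>tuples (sdom M) (k + m). sat M (lenv b) (\<theta> j) \<longrightarrow> \<delta> 1 (inst M 1 p b) = ereal (real j)"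
    using delta_levels_1_formulas[OF one] by blast
  define \<chi> where "\<chi> j = ex_first_and (k + m) p (\<theta> j)" for j
  have \<chi>: "pformula fa ra k m (\<chi> j)" for j
    unfolding \<chi>_def using p \<theta>(1) by (intro pformula_ex_first_and) auto
  obtain g where "\<forall>j. definable_fun fa ra M m (g j) \<and>
      (\<forall>cs\<in>tuples (sdom M) m. g j cs \<le> b \<and> \<delta> k (inst M k (\<chi> j) cs) = ereal (g j cs))"
    using delta_levels_choice[where \<chi> = \<chi>, OF IH \<chi>] by blast
  then have g_def: "\<And>j. definable_fun fa ra M m (g j)"
    and g_val: "\<And>j cs. cs \<in> tuples (sdom M) m \<Longrightarrow> g j cs \<le> b \<and> \<delta> k (inst M k (\<chi> j) cs) = ereal (g j cs)"
    by blast+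
  define NE where "NE j = {cs \<in> tuples (sdom M) m. inst M k (\<chi> j) cs \<noteq> {}}" for j
  define val where "val cs = Max ((\<lambda>j. if cs \<in> NE j then g j cs + j else 0) ` {..r})" for cs
  show "\<exists>g. definable_fun fa ra M m g \<and>
    (\<forall>cs\<in>tuples (sdom M) m. g cs \<le> b + r \<and> \<delta> (Suc k) (inst M (Suc k) p cs) = ereal (g cs))"
  proof (intro exI conjI ballI)
    show "definable_fun fa ra M m val"
      unfolding val_def NE_def
      by (intro definable_fun_Max definable_fun_if definable0_inst_ne[OF \<chi>]
          definable_fun_add_const g_def definable_fun_const) auto
    fix cs
    assume cs: "cs \<in> tuples (sdom M) m"
    show "val cs \<le> b + r"
      unfolding val_def using g_val[OF cs] by (intro Max.boundedI) (auto intro: add_mono)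
    have "\<delta> (Suc k) (inst M (Suc k) p cs) = ereal (real (Max ((\<lambda>j. if j \<in>
        {j. j \<le> r \<and> inst M k (\<chi> j) cs \<noteq> {}} then g j cs + j else 0) ` {..r})))"
      unfolding \<chi>_def
      by (rule delta_inst_Suc[OF p cs _ _ _ L]) (use \<theta> g_val[OF cs] in \<open>auto simp: \<chi>_def\<close>)
    also have "\<dots> = ereal (val cs)"
      unfolding val_def NE_def using cs by (auto intro!: arg_cong[where f = Max] image_cong)
    finally show "\<delta> (Suc k) (inst M (Suc k) p cs) = ereal (val cs)" .
  qed
qed

lemma delta_levels_mult:
  assumes "filterlim lgX at_top \<U>" "delta_levels 1 r"
  shows "delta_levels k (k * r)"
proof (induction k)
  case 0
  then show ?case
    using delta_levels_0 by simp
next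
  case (Suc k)
  then show ?case
    using delta_levels_Suc[OF assms Suc.IH] by (simp add: add.commute)
qed

lemma lgX_tendsto_at_top:
  assumes "infinite (sdom M)" "\<not> eventually (\<lambda>i. lgX i = 0) \<U>" "delta_levels 1 b"
  shows "filterlim lgX at_top \<U>"
proof -
  have pf: "pformula fa ra 1 0 (Eq (Var 0) (Var 0))"
    by (simp add: pformula_def)
  have nil: "[] \<in> tuples (sdom M) 0"
    by (simp add: tuples_0)
  obtain v where "\<delta> 1 (inst M 1 (Eq (Var 0) (Var 0)) []) = ereal v"
    using delta_levelsD[OF assms(3) pf] nil by blast
  then have "((\<lambda>i. lg (card (inst (S i) 1 (Eq (Var 0) (Var 0)) (urep_list [] i))) / lgX i) \<longlongrightarrow> v) \<U>"
    by (rule delta_inst_eq_ereal_iff[OF pf nil, THEN iffD1])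
  moreover have "inst (S i) 1 (Eq (Var 0) (Var 0)) (urep_list [] i) = tuples (sdom (S i)) 1" for i
    by (auto simp: inst_def urep_list_def)
  ultimately have "((\<lambda>i. lg (card (sdom (S i))) / lgX i) \<longlongrightarrow> v) \<U>"
    by (simp only: card_tuples_1)
  moreover have "filterlim (\<lambda>i. lg (card (sdom (S i)))) at_top \<U>"
    by (rule lg_tendsto_at_top[OF card_sdom_tendsto[OF assms(1)]])
  moreover have "eventually (\<lambda>i. 0 < lgX i) \<U>"
    using assms(2) lg_nonneg by (auto simp: not_eventually_U lgX_def less_le elim: eventually_mono)
  ultimately show ?thesis
    by (rule filterlim_at_top_if_ratio_tendsto)
qed

lemma delta_definable_if_levels:
  assumes "\<And>k. \<exists>b. delta_levels k b"
  shows "delta_definable fa ra S U n X"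
  unfolding delta_definable_def delta_continuous_def
proof (intro conjI allI impI)
  fix p k m
  assume p: "pformula fa ra k m p"
  obtain b g where g: "definable_fun fa ra M m g"
    "\<forall>cs\<in>tuples (sdom M) m. g cs \<le> b \<and> \<delta> k (inst M k p cs) = ereal (g cs)"
    using assms delta_levelsD[OF _ p] by metis
  show "finite ((\<lambda>a. \<delta> k (inst M k p a)) ` tuples (sdom M) m)"
    by (rule finite_subset[of _ "(\<lambda>j. ereal (real j)) ` {..b}"]) (use g(2) in auto)
  fix r1 r2 :: real
  assume "r1 < r2"
  define D where "D = (\<Union>l\<in>{l. l \<le> b \<and> real l \<le> r1}. {cs \<in> tuples (sdom M) m. g cs = l})"
  have "definable0 fa ra M m D"
    unfolding D_def using g(1) by (intro definable0_UN) (auto simp: definable_fun_def)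
  moreover have D: "D = {a \<in> tuples (sdom M) m. \<delta> k (inst M k p a) \<le> ereal r1}"
    unfolding D_def using g(2) by auto
  moreover have "D \<subseteq> {a \<in> tuples (sdom M) m. \<delta> k (inst M k p a) < ereal r2}"
    unfolding D using \<open>r1 < r2\<close> by (auto intro: order.strict_trans1)
  ultimately show "\<exists>D. definable0 fa ra M m D \<and>
      {a \<in> tuples (sdom M) m. \<delta> k (inst M k p a) \<le> ereal r1} \<subseteq> D \<and>
      D \<subseteq> {a \<in> tuples (sdom M) m. \<delta> k (inst M k p a) < ereal r2}"
    by blast
qed

end

theorem corollary2p12:
  fixes fa :: "'f \<Rightarrow> nat" and ra :: "'r \<Rightarrow> nat"
    and S :: "'i \<Rightarrow> ('f, 'r, 'a) struc" and U :: "'i set set"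
    and n :: nat and X :: "('i \<Rightarrow> 'a) set list set" and r :: nat
  assumes strucs: "\<And>i. is_struc fa (S i)"
    and fin: "\<And>i. finite (sdom (S i))"
    and ultra: "ultrafilter U"
    and infM: "infinite (sdom (uprod S U))"
    and intX: "internal S U n X"
    and vals: "\<And>phi m b. pformula fa ra 1 m phi \<Longrightarrow> b \<in> tuples (sdom (uprod S U)) m \<Longrightarrow>
         udelta S U n X 1 (inst (uprod S U) 1 phi b) \<in> {ereal (real j) | j. j \<le> r}"
    and defs: "\<And>phi m j. pformula fa ra 1 m phi \<Longrightarrow> j \<le> r \<Longrightarrow>
         definable0 fa ra (uprod S U) m
           {b \<in> tuples (sdom (uprod S U)) m.
              udelta S U n X 1 (inst (uprod S U) 1 phi b) = ereal (real j)}"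
  shows "(\<forall>psi k m c. pformula fa ra k m psi \<longrightarrow> c \<in> tuples (sdom (uprod S U)) m \<longrightarrow>
            udelta S U n X k (inst (uprod S U) k psi c) \<in> {ereal (real j) | j. j \<le> k * r})
         \<and> delta_definable fa ra S U n X"
proof -
  interpret pseudofinite_dimension U fa ra S n X
    by unfold_locales (use ultra strucs fin in auto)
  have one: "delta_levels 1 r"
    using vals defs by (rule delta_levelsI)
  have levels: "delta_levels k (k * r)" for k
  proof (cases "eventually (\<lambda>i. lgX i = 0) \<U>")
    case True
    then show ?thesis
      by (rule delta_levels_degenerate)
  next
    case False
    then show ?thesis
      using infM one by (intro delta_levels_mult lgX_tendsto_at_top)
  qed
  then show ?thesis
    using delta_levels_values delta_definable_if_levels by blast
qed

end
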